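(* In the Setting of the context (including the smoothness, bounded variance and bounded heterogeneity assumptions), run DAT-SGD with linear weights $\alpha_t=t$ and a learning rate $0<\eta\le\frac{\rho^2}{8\sqrt{80}\,L}$. Then for all $t\ge1$, \[ \Gamma_t\le\frac{2560\,\tilde\sigma^2\eta^2}{\rho^4},\qquad\text{where }\tilde\sigma^2=2\sigma^2+\zeta^2. \]
   Context: Setting. Let $M,d\ge1$ be integers. For each $i\in\{1,\dots,M\}$, $\mathcal{D}_i$ is a probability distribution, $f_i(\cdot,z):\mathbb{R}^d\to\mathbb{R}$ is differentiable for each sample $z$, and $f_i(x)=\mathbb{E}_{z\sim\mathcal{D}_i}[f_i(x,z)]$ is differentiable with $\mathbb{E}_{z\sim\mathcal{D}_i}[\nabla f_i(x,z)]=\nabla f_i(x)$ for all $x$. Let $f=\frac1M\sum_{i=1}^M f_i$. Standing assumptions: (smoothness) each $\nabla f_i$ is $L$-Lipschitz, with $L>0$; (bounded variance) $\mathbb{E}_{z\sim\mathcal{D}_i}\|\nabla f_i(x,z)-\nabla f_i(x)\|^2\le\sigma^2$ for all $x\in\mathbb{R}^d$, $i\in[M]$; (bounded heterogeneity) $\frac1M\sum_{i=1}^M\|\nabla f_i(x)-\nabla f(x)\|^2\le\zeta^2$ for all $x$. Gossip matrix: $P\in[0,1]^{M\times M}$ is symmetric with $P\mathbf{1}=\mathbf{1}$ (hence doubly stochastic); its (real) eigenvalues satisfy $1=\lambda_1>|\lambda_2|\ge\cdots\ge|\lambda_M|$, and the spectral gap is $\rho=1-|\lambda_2|\in(0,1]$.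 Algorithm DAT-SGD: inputs $w_1\in\mathbb{R}^d$, learning rate $\eta>0$, positive weights $(\alpha_t)_{t\ge1}$; let $\alpha_{1:t}=\sum_{s=1}^t\alpha_s$, $\alpha_{1:0}=0$, $\delta_t=\alpha_t/\alpha_{1:t}$. Initialize $w_1^i=x_1^i=w_1$ for all $i$. At each round $t=1,2,\dots$, every machine $i$ draws $z_t^i\sim\mathcal{D}_i$ independently of all other samples, sets $g_t^i=\nabla f_i(x_t^i,z_t^i)$, $w_{t+1/2}^i=w_t^i-\eta\alpha_t g_t^i$, $x_{t+1/2}^i=(1-\delta_t)x_t^i+\delta_t w_{t+1/2}^i$, and then $w_{t+1}^i=\sum_{j=1}^M P_{ij}w_{t+1/2}^j$, $x_{t+1}^i=\sum_{j=1}^M P_{ij}x_{t+1/2}^j$. Averages: $\bar x_t=\frac1M\sum_i x_t^i$, $\bar w_t=\frac1M\sum_i w_t^i$, $\bar g_t=\frac1M\sum_i g_t^i$. Consensus distances: $\Gamma_t=\frac1M\sum_{i=1}^M\mathbb{E}\|x_t^i-\bar x_t\|^2$, $\Xi_t=\frac1M\sum_{i=1}^M\mathbb{E}\|w_t^i-\bar w_t\|^2$, $\Psi_t=\frac1M\sum_{i=1}^M\mathbb{E}\|g_t^i-\bar g_t\|^2$. *)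

theory Defs
  imports "HOL-Probability.Probability" "Jordan_Normal_Form.Char_Poly"
begin

text \<open>Machines are indexed by 0..M-1 (0-based),
  P is the gossip matrix (a JNF matrix), gf i x z is the stochastic gradient
  of machine i at point x with sample z, zs i is the sample drawn by machine i
  in round t, alpha are the weights.\<close>

definition dat_step ::
  "nat \<Rightarrow> real mat \<Rightarrow> (nat \<Rightarrow> 'x::euclidean_space \<Rightarrow> 'z \<Rightarrow> 'x) \<Rightarrow> real \<Rightarrow> (nat \<Rightarrow> real)
   \<Rightarrow> nat \<Rightarrow> (nat \<Rightarrow> 'z) \<Rightarrow> (nat \<Rightarrow> 'x) \<times> (nat \<Rightarrow> 'x) \<Rightarrow> (nat \<Rightarrow> 'x) \<times> (nat \<Rightarrow> 'x)"
where
  "dat_step M P gf eta alpha t zs wx =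
     (let w = fst wx; x = snd wx;
          g = (\<lambda>i. gf i (x i) (zs i));
          wh = (\<lambda>i. w i - (eta * alpha t) *\<^sub>R g i);
          \<delta> = alpha t / (\<Sum>s=1..t. alpha s);
          xh = (\<lambda>i. (1 - \<delta>) *\<^sub>R x i + \<delta> *\<^sub>R wh i)
      in ((\<lambda>i. \<Sum>j<M. P $$ (i, j) *\<^sub>R wh j),
          (\<lambda>i. \<Sum>j<M. P $$ (i, j) *\<^sub>R xh j)))"

text \<open>dat_iter ... z t = (w_t, x_t) for t \<ge> 1, where z t i is the sample of
  machine i in round t.  (Index t = 0 is unused and equals the initialization.)\<close>

fun dat_iter ::
  "nat \<Rightarrow> real mat \<Rightarrow> (nat \<Rightarrow> 'x::euclidean_space \<Rightarrow> 'z \<Rightarrow> 'x) \<Rightarrow> real \<Rightarrow> (nat \<Rightarrow> real)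
   \<Rightarrow> 'x \<Rightarrow> (nat \<Rightarrow> nat \<Rightarrow> 'z) \<Rightarrow> nat \<Rightarrow> (nat \<Rightarrow> 'x) \<times> (nat \<Rightarrow> 'x)"
where
  "dat_iter M P gf eta alpha w1 z 0 = ((\<lambda>i. w1), (\<lambda>i. w1))"
| "dat_iter M P gf eta alpha w1 z (Suc t) =
     (if t = 0 then ((\<lambda>i. w1), (\<lambda>i. w1))
      else dat_step M P gf eta alpha t (z t) (dat_iter M P gf eta alpha w1 z t))"

definition consensus_x ::
  "'w measure \<Rightarrow> nat \<Rightarrow> real mat \<Rightarrow> (nat \<Rightarrow> 'x::euclidean_space \<Rightarrow> 'z \<Rightarrow> 'x) \<Rightarrow> real
   \<Rightarrow> (nat \<Rightarrow> real) \<Rightarrow> 'x \<Rightarrow> (nat \<Rightarrow> nat \<Rightarrow> 'w \<Rightarrow> 'z) \<Rightarrow> nat \<Rightarrow> ennreal"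
where
  "consensus_x S M P gf eta alpha w1 Z t =
     (\<integral>\<^sup>+ \<omega>. ennreal ((1 / real M) *
        (\<Sum>i<M. (norm (snd (dat_iter M P gf eta alpha w1 (\<lambda>s j. Z s j \<omega>) t) i
                     - (1 / real M) *\<^sub>R (\<Sum>j<M. snd (dat_iter M P gf eta alpha w1 (\<lambda>s j. Z s j \<omega>) t) j)))\<^sup>2)) \<partial>S)"

end

(* The gossip step contracts the spread of a family of vectors around its mean by
   |lambda_2| = 1 - rho: on mean-zero vectors the maximal Rayleigh quotient of P^2 is attained
   (compactness) at an eigenvector, from which one extracts a mean-zero eigenvector of P itself,
   and 1 is a simple eigenvalue because the Schur form of P has a single diagonal entry 1.
   Writing Xi, Gamma, Psi for the spreads of w, x and the stochastic gradients, one round gives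
   Xi_{t+1} <= (1 - rho/2) Xi_t + (3/rho) eta^2 t^2 Psi_t and
   Gamma_{t+1} <= (1 - rho/2) Gamma_t + (3/rho) delta_t^2 Xi_{t+1/2}, while
   E Psi_t <= 3 sigma^2 + 3 L^2 E Gamma_t + 3 zeta^2 since x_t is independent of the fresh samples.
   For alpha_t = t we have delta_t = 2/(t+1), and a joint induction gives
   E Xi_t <= 27 sigma~^2 eta^2 t^2 / rho^2 together with the claimed bound on Gamma_t. *)

theory Submission
  imports Defs "Jordan_Normal_Form.Schur_Decomposition"
begin

no_notation vec_nth (infixl "$" 90)

section \<open>Mixing with the gossip matrix\<close>

text \<open>Families indexed by the machines are functions on \<open>nat\<close> of which only the values below
  \<open>M\<close> matter; \<open>mix M P v\<close> is the gossip step \<open>v\<^sup>i \<mapsto> \<Sum>\<^sub>j P\<^sub>i\<^sub>j v\<^sup>j\<close> of the algorithm.\<close>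

definition mix :: "nat \<Rightarrow> real mat \<Rightarrow> (nat \<Rightarrow> 'a::real_vector) \<Rightarrow> nat \<Rightarrow> 'a" where
  "mix M P v i = (\<Sum>j<M. P $$ (i, j) *\<^sub>R v j)"

lemma mix_real: "mix M P (y :: nat \<Rightarrow> real) i = (\<Sum>j<M. P $$ (i, j) * y j)"
  by (simp add: mix_def)

lemma mix_vec:
  assumes "P \<in> carrier_mat M M" "i < M"
  shows "(P *\<^sub>v vec M y) $ i = mix M P y i"
  using assms by (auto simp: mix_real scalar_prod_def lessThan_atLeast0 intro!: sum.cong)

lemma mix_add: "mix M P (\<lambda>j. u j + v j) i = mix M P u i + mix M P v i"
  by (simp add: mix_def scaleR_add_right sum.distrib)

lemma mix_scaleR: "mix M P (\<lambda>j. c *\<^sub>R v j) i = c *\<^sub>R mix M P v i"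
  by (simp add: mix_def scaleR_sum_right mult.commute)

lemma mix_mult: "mix M P (\<lambda>j. c * (y :: nat \<Rightarrow> real) j) i = c * mix M P y i"
  using mix_scaleR[of M P c y i] by simp

lemma sum_mix:
  assumes "\<And>j. j < M \<Longrightarrow> (\<Sum>i<M. P $$ (i, j)) = 1"
  shows "(\<Sum>i<M. mix M P v i) = (\<Sum>j<M. v j)"
proof -
  have "(\<Sum>i<M. mix M P v i) = (\<Sum>j<M. (\<Sum>i<M. P $$ (i, j)) *\<^sub>R v j)"
    unfolding mix_def by (subst sum.swap) (simp add: scaleR_sum_left)
  also have "\<dots> = (\<Sum>j<M. v j)" using assms by simp
  finally show ?thesis .
qed

lemma sum_mult_mix_symmetric:
  assumes "\<And>i j. i < M \<Longrightarrow> j < M \<Longrightarrow> P $$ (i, j) = P $$ (j, i)"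
  shows "(\<Sum>i<M. mix M P y i * z i) = (\<Sum>j<M. (y :: nat \<Rightarrow> real) j * mix M P z j)"
proof -
  have "(\<Sum>i<M. mix M P y i * z i) = (\<Sum>i<M. \<Sum>j<M. P $$ (i, j) * y j * z i)"
    by (simp add: mix_real sum_distrib_right)
  also have "\<dots> = (\<Sum>j<M. \<Sum>i<M. y j * (P $$ (j, i) * z i))"
    by (subst sum.swap) (auto intro!: sum.cong simp: assms)
  also have "\<dots> = (\<Sum>j<M. y j * mix M P z j)"
    by (simp add: mix_real sum_distrib_left)
  finally show ?thesis .
qed

section \<open>Spectral contraction on mean-zero vectors\<close>

lemma eigenvalue_mix_root:
  assumes P: "P \<in> carrier_mat M M" and cp: "char_poly P = (\<Prod>k<M. [:- lam k, 1:])"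
    and i0: "i0 < M" "(y :: nat \<Rightarrow> real) i0 \<noteq> 0" and eig: "\<And>i. i < M \<Longrightarrow> mix M P y i = \<beta> * y i"
  shows "\<exists>k<M. \<beta> = lam k"
proof -
  have "eigenvector P (vec M y) \<beta>"
    unfolding eigenvector_def
  proof (intro conjI)
    show "vec M y \<in> carrier_vec (dim_row P)" using P by auto
    show "vec M y \<noteq> 0\<^sub>v (dim_row P)"
      using P i0 by (metis carrier_matD(1) index_vec index_zero_vec(1))
    show "P *\<^sub>v vec M y = \<beta> \<cdot>\<^sub>v vec M y"
      by (rule eq_vecI) (use P eig mix_vec[OF P] in auto)
  qed
  then have "poly (char_poly P) \<beta> = 0"
    using eigenvalue_root_char_poly[OF P] unfolding eigenvalue_def by blast
  then have "(\<Prod>k<M. \<beta> - lam k) = 0" unfolding cp by (simp add: poly_prod)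
  then show ?thesis by auto
qed

lemma upper_triangular_fixed_vec_tail_zero:
  fixes B :: "'a::field mat"
  assumes B: "B \<in> carrier_mat M M" "upper_triangular B"
    and a: "a \<in> carrier_vec M" "B *\<^sub>v a = a"
    and diag: "\<And>k. 1 \<le> k \<Longrightarrow> k < M \<Longrightarrow> B $$ (k, k) \<noteq> 1"
  shows "1 \<le> k \<Longrightarrow> k < M \<Longrightarrow> a $ k = 0"
proof (induction "M - k" arbitrary: k rule: less_induct)
  case less
  have later: "a $ j = 0" if "k < j" "j < M" for j
    using less.hyps[of j] that less.prems by auto
  have "a $ k = (B *\<^sub>v a) $ k" using a by simp
  also have "\<dots> = (\<Sum>j\<in>{0..<M}. B $$ (k, j) * a $ j)"
    using B a(1) less.prems by (auto simp: scalar_prod_def)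
  also have "\<dots> = (\<Sum>j\<in>{0..<M}. if j = k then B $$ (k, k) * a $ k else 0)"
  proof (rule sum.cong)
    fix j assume "j \<in> {0..<M}"
    then show "B $$ (k, j) * a $ j = (if j = k then B $$ (k, k) * a $ k else 0)"
      using B later less.prems by (cases "j < k") (auto simp: upper_triangular_def)
  qed simp
  also have "\<dots> = B $$ (k, k) * a $ k" using less.prems by simp
  finally have "(B $$ (k, k) - 1) * a $ k = 0" by (simp add: algebra_simps)
  then show ?case using diag[OF less.prems] by simp
qed

text \<open>In a Schur form \<open>W' * P * W = B\<close> whose only diagonal entry equal to 1 is \<open>B $$ (0, 0)\<close>,
  back substitution shows that every fixed vector of \<open>B\<close> is a multiple of the first unit vector.\<close>
lemma fixed_vecs_collinear:
  fixes P :: "'a::conjugatable_ordered_field mat"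
  assumes P: "P \<in> carrier_mat M M" and cp: "char_poly P = (\<Prod>k<M. [:- lam k, 1:])"
    and simple: "\<And>k. 1 \<le> k \<Longrightarrow> k < M \<Longrightarrow> lam k \<noteq> 1"
  obtains q where "q \<in> carrier_vec M"
    and "\<And>c. c \<in> carrier_vec M \<Longrightarrow> P *\<^sub>v c = c \<Longrightarrow> \<exists>\<alpha>. c = \<alpha> \<cdot>\<^sub>v q"
proof -
  have "(\<Prod>k<M. [:- lam k, 1:]) = (\<Prod>e\<leftarrow>map lam [0..<M]. [:- e, 1:])"
    by (induction M) auto
  then obtain B W W' where "similar_mat_wit P B W W'" and ut: "upper_triangular B"
    and dg: "diag_mat B = map lam [0..<M]"
    using schur_decomposition[OF P] cp by (metis prod_cases3)
  note sim = similar_mat_witD2[OF P this(1)]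
  have B: "B \<in> carrier_mat M M" and W: "W \<in> carrier_mat M M" and W': "W' \<in> carrier_mat M M"
    using sim by auto
  have Bkk: "B $$ (k, k) = lam k" if "k < M" for k
    using arg_cong[OF dg, of "\<lambda>xs. xs ! k"] that B by (simp add: diag_mat_def)
  have WPW: "W' * P * W = B"
  proof -
    have "W' * P * W = (W' * W) * B * (W' * W)"
      unfolding sim(3) using W W' B by (simp add: assoc_mult_mat[of _ M M _ M _ M])
    then show ?thesis using sim B by simp
  qed
  have "\<exists>\<alpha>. c = \<alpha> \<cdot>\<^sub>v (W *\<^sub>v unit_vec M 0)" if c: "c \<in> carrier_vec M" and Pc: "P *\<^sub>v c = c" for c
  proof -
    define a where "a = W' *\<^sub>v c"
    have a: "a \<in> carrier_vec M" using W' c unfolding a_def by auto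
    have Wa: "W *\<^sub>v a = c"
      unfolding a_def using W W' c sim by (metis assoc_mult_mat_vec one_mult_mat_vec)
    have "B *\<^sub>v a = W' *\<^sub>v (P *\<^sub>v (W *\<^sub>v a))"
      unfolding WPW[symmetric] using W W' P a by (simp add: assoc_mult_mat_vec[of _ M M _ M])
    then have Ba: "B *\<^sub>v a = a" using Wa Pc unfolding a_def by simp
    have "a $ k = 0" if "1 \<le> k" "k < M" for k
      by (rule upper_triangular_fixed_vec_tail_zero[OF B ut a Ba _ that]) (use Bkk simple in auto)
    then have "a = (a $ 0) \<cdot>\<^sub>v unit_vec M 0"
      by (intro eq_vecI) (use a in \<open>auto simp: unit_vec_def\<close>)
    then have "c = W *\<^sub>v ((a $ 0) \<cdot>\<^sub>v unit_vec M 0)" using Wa by simp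
    also have "\<dots> = (a $ 0) \<cdot>\<^sub>v (W *\<^sub>v unit_vec M 0)" using W by (simp add: mult_mat_vec)
    finally show ?thesis by blast
  qed
  then show ?thesis by (intro that[of "W *\<^sub>v unit_vec M 0"]) (use W in auto)
qed

lemma mean_zero_fixed_point_zero:
  fixes w :: "nat \<Rightarrow> real"
  assumes P: "P \<in> carrier_mat M M" and cp: "char_poly P = (\<Prod>k<M. [:- lam k, 1:])"
    and simple: "\<And>k. 1 \<le> k \<Longrightarrow> k < M \<Longrightarrow> lam k \<noteq> 1"
    and rows: "\<And>i. i < M \<Longrightarrow> (\<Sum>j<M. P $$ (i, j)) = 1"
    and fixed: "\<And>i. i < M \<Longrightarrow> mix M P w i = w i" and mean0: "(\<Sum>i<M. w i) = 0"
    and i: "i < M"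
  shows "w i = 0"
proof -
  obtain q where q: "q \<in> carrier_vec M"
    and collinear: "\<And>c. c \<in> carrier_vec M \<Longrightarrow> P *\<^sub>v c = c \<Longrightarrow> \<exists>\<alpha>. c = \<alpha> \<cdot>\<^sub>v q"
    using fixed_vecs_collinear[OF P cp simple] by blast
  have "P *\<^sub>v vec M w = vec M w" by (rule eq_vecI) (use P fixed mix_vec[OF P] in auto)
  with collinear[OF vec_carrier] obtain \<alpha> where \<alpha>: "vec M w = \<alpha> \<cdot>\<^sub>v q" by blast
  have "P *\<^sub>v vec M (\<lambda>_. 1) = vec M (\<lambda>_. 1)"
    by (rule eq_vecI) (use P rows mix_vec[OF P] in \<open>auto simp: mix_real\<close>)
  with collinear[OF vec_carrier] obtain \<beta> where \<beta>: "vec M (\<lambda>_. 1) = \<beta> \<cdot>\<^sub>v q" by blast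
  have w_const: "w j = \<alpha> / \<beta>" if "j < M" for j
  proof -
    have wj: "w j = \<alpha> * q $ j" and qj: "\<beta> * q $ j = 1"
      using arg_cong[OF \<alpha>, of "\<lambda>v. v $ j"] arg_cong[OF \<beta>, of "\<lambda>v. v $ j"] that q by auto
    have "w j * \<beta> = \<alpha> * (\<beta> * q $ j)" using wj by (simp add: mult_ac)
    then have "w j * \<beta> = \<alpha>" using qj by simp
    moreover have "\<beta> \<noteq> 0" using qj by auto
    ultimately show ?thesis by (simp add: eq_divide_eq)
  qed
  then have "real M * (\<alpha> / \<beta>) = 0" using mean0 by simp
  then show ?thesis using w_const[OF i] i by simp
qed

lemma quadratic_nonpos_imp_linear_zero:
  fixes A C :: real
  assumes "\<And>s. 2 * s * A + s\<^sup>2 * C \<le> 0"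
  shows "A = 0"
proof (rule ccontr)
  assume A: "A \<noteq> 0"
  define d where "d = \<bar>C\<bar> + 1"
  have d: "d > 0" "2 * d + C > 0" unfolding d_def by auto
  have "2 * (A / d) * A + (A / d)\<^sup>2 * C = A\<^sup>2 / d\<^sup>2 * (2 * d + C)"
    using d by (simp add: field_simps power2_eq_square)
  also have "\<dots> > 0" using A d by simp
  finally show False using assms[of "A / d"] by simp
qed

lemma compact_unit_cube: "compact (PiE UNIV (\<lambda>_::nat. {-1..1::real}))"
proof -
  have "compactin (product_topology (\<lambda>_::nat. euclidean) UNIV) (PiE UNIV (\<lambda>_. {-1..1::real}))"
    by (simp add: compactin_PiE)
  then show ?thesis unfolding euclidean_product_topology by simp
qed

lemma continuous_on_coordinate [continuous_intros]: "continuous_on S (\<lambda>x::nat \<Rightarrow> real. x i)"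
  by (rule continuous_on_subset[OF continuous_on_product_coordinates]) auto

lemma compact_unit_mean_zero_vectors:
  "compact {z :: nat \<Rightarrow> real. (\<forall>i\<ge>M. z i = 0) \<and> (\<Sum>i<M. (z i)\<^sup>2) = 1 \<and> (\<Sum>i<M. z i) = 0}"
proof -
  define K where "K = {z :: nat \<Rightarrow> real. (\<forall>i\<ge>M. z i = 0) \<and> (\<Sum>i<M. (z i)\<^sup>2) = 1 \<and> (\<Sum>i<M. z i) = 0}"
  have "K \<subseteq> PiE UNIV (\<lambda>_. {-1..1})"
  proof
    fix z assume z: "z \<in> K"
    have "\<bar>z i\<bar> \<le> 1" for i
    proof (cases "i < M")
      case True
      have "(z i)\<^sup>2 \<le> (\<Sum>i<M. (z i)\<^sup>2)" by (rule member_le_sum) (use True in auto)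
      then show ?thesis using z by (simp add: K_def abs_square_le_1)
    next
      case False
      then show ?thesis using z by (simp add: K_def)
    qed
    then have "z i \<in> {-1..1}" for i by (simp add: abs_le_iff)
    then show "z \<in> PiE UNIV (\<lambda>_. {-1..1})" by auto
  qed
  moreover have "closed K"
  proof -
    have "K = (\<Inter>i\<in>{M..}. {z. z i = 0}) \<inter> {z. (\<Sum>i<M. (z i)\<^sup>2) = 1} \<inter> {z. (\<Sum>i<M. z i) = 0}"
      unfolding K_def by auto
    then show ?thesis by (auto intro!: closed_Int closed_INT closed_Collect_eq continuous_intros)
  qed
  ultimately have "compact K"
    using compact_Int_closed[OF compact_unit_cube] by (metis inf.absorb_iff2)
  then show ?thesis unfolding K_def .
qed

text \<open>Normalised vectors are taken supported on \<open>{..<M}\<close>, so that they form a compact set.\<close>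
lemma mix_sq_sum_maximizer:
  fixes y :: "nat \<Rightarrow> real"
  assumes nontrivial: "(\<Sum>j<M. y j) = 0" "i0 < M" "y i0 \<noteq> 0"
  shows "\<exists>ym :: nat \<Rightarrow> real. (\<Sum>i<M. ym i) = 0 \<and> (\<Sum>i<M. (ym i)\<^sup>2) = 1 \<and>
    (\<forall>z. (\<Sum>i<M. z i) = 0 \<longrightarrow>
       (\<Sum>i<M. (mix M P z i)\<^sup>2) \<le> (\<Sum>i<M. (mix M P ym i)\<^sup>2) * (\<Sum>i<M. (z i)\<^sup>2))"
proof -
  define f where "f = (\<lambda>z::nat \<Rightarrow> real. \<Sum>i<M. (mix M P z i)\<^sup>2)"
  define nq where "nq = (\<lambda>z::nat \<Rightarrow> real. \<Sum>i<M. (z i)\<^sup>2)"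
  define K where "K = {z. (\<forall>i\<ge>M. z i = 0) \<and> nq z = 1 \<and> (\<Sum>i<M. z i) = 0}"
  define normalize where "normalize = (\<lambda>z i. (1 / sqrt (nq z)) * (if i < M then z i else 0))"
  have nq_nonneg: "nq z \<ge> 0" for z unfolding nq_def by (simp add: sum_nonneg)
  have coord_le: "(z i)\<^sup>2 \<le> nq z" if "i < M" for z i
    unfolding nq_def by (rule member_le_sum) (use that in auto)
  have normalize: "normalize z \<in> K" "f (normalize z) = f z / nq z"
    if "nq z \<noteq> 0" "(\<Sum>i<M. z i) = 0" for z
  proof -
    have pos: "nq z > 0" using that nq_nonneg[of z] by simp
    have "nq (normalize z) = nq z / (sqrt (nq z))\<^sup>2"
      unfolding nq_def normalize_def by (simp add: power_mult_distrib power_divide sum_divide_distrib)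
    then have "nq (normalize z) = 1" using pos by simp
    moreover have "(\<Sum>i<M. normalize z i) = 0"
      unfolding normalize_def using that(2) by (simp add: sum_divide_distrib[symmetric])
    ultimately show "normalize z \<in> K" unfolding K_def normalize_def using pos by auto
    have "mix M P (normalize z) i = (1 / sqrt (nq z)) * mix M P z i" for i
      unfolding normalize_def mix_real by (simp add: sum_distrib_left mult_ac)
    then show "f (normalize z) = f z / nq z"
      unfolding f_def using pos by (simp add: power_mult_distrib power_divide sum_divide_distrib)
  qed
  have "nq y \<noteq> 0" using coord_le[OF nontrivial(2), of y] nontrivial(3) by auto
  then have nonempty: "K \<noteq> {}" using normalize(1) nontrivial(1) by blast
  have compact: "compact K" using compact_unit_mean_zero_vectors unfolding K_def nq_def .
  have continuous: "continuous_on K f" unfolding f_def mix_real by (auto intro!: continuous_intros)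
  obtain ym where ym: "ym \<in> K" and max: "\<And>z. z \<in> K \<Longrightarrow> f z \<le> f ym"
    using continuous_attains_sup[OF compact nonempty continuous] by blast
  have bound: "f z \<le> f ym * nq z" if "(\<Sum>i<M. z i) = 0" for z
  proof (cases "nq z = 0")
    case True
    then have "z i = 0" if "i < M" for i using coord_le[OF that, of z] by simp
    then show ?thesis unfolding f_def by (simp add: mix_real nq_nonneg sum_nonneg)
  next
    case False
    then show ?thesis
      using max[OF normalize(1)[OF False that]] normalize(2)[OF False that] nq_nonneg[of z]
      by (simp add: divide_le_eq mult.commute)
  qed
  show ?thesis by (intro exI[of _ ym]) (use ym bound in \<open>auto simp: K_def f_def nq_def\<close>)
qed

text \<open>First-order optimality of the maximiser, combined with the symmetry of \<open>P\<close>, makes it an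
  eigenvector of \<open>P\<^sup>2\<close>.\<close>
lemma mix_sq_sum_maximizer_eigen:
  fixes ym :: "nat \<Rightarrow> real"
  assumes sym: "\<And>i j. i < M \<Longrightarrow> j < M \<Longrightarrow> P $$ (i, j) = P $$ (j, i)"
    and cols: "\<And>j. j < M \<Longrightarrow> (\<Sum>i<M. P $$ (i, j)) = 1"
    and mean0: "(\<Sum>i<M. ym i) = 0" and unit: "(\<Sum>i<M. (ym i)\<^sup>2) = 1"
    and max: "\<And>z. (\<Sum>i<M. z i) = 0 \<Longrightarrow> (\<Sum>i<M. (mix M P z i)\<^sup>2) \<le> \<mu> * (\<Sum>i<M. (z i)\<^sup>2)"
    and \<mu>: "\<mu> = (\<Sum>i<M. (mix M P ym i)\<^sup>2)"
    and i: "i < M"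
  shows "mix M P (mix M P ym) i = \<mu> * ym i"
proof -
  have first_order: "(\<Sum>i<M. mix M P ym i * mix M P z i) = \<mu> * (\<Sum>i<M. ym i * z i)"
    if z: "(\<Sum>i<M. z i) = 0" for z
  proof -
    let ?A = "(\<Sum>i<M. mix M P ym i * mix M P z i) - \<mu> * (\<Sum>i<M. ym i * z i)"
    let ?C = "(\<Sum>i<M. (mix M P z i)\<^sup>2) - \<mu> * (\<Sum>i<M. (z i)\<^sup>2)"
    have "2 * s * ?A + s\<^sup>2 * ?C \<le> 0" for s
    proof -
      have "(\<Sum>i<M. ym i + s * z i) = 0"
        using mean0 z by (simp add: sum.distrib sum_distrib_left[symmetric])
      note max[OF this]
      moreover have "(\<Sum>i<M. (mix M P (\<lambda>j. ym j + s * z j) i)\<^sup>2)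
          = \<mu> + 2 * s * (\<Sum>i<M. mix M P ym i * mix M P z i) + s\<^sup>2 * (\<Sum>i<M. (mix M P z i)\<^sup>2)"
        unfolding mix_add mix_mult \<mu>
        by (simp add: power2_eq_square algebra_simps sum.distrib sum_distrib_left)
      moreover have "(\<Sum>i<M. (ym i + s * z i)\<^sup>2)
          = 1 + 2 * s * (\<Sum>i<M. ym i * z i) + s\<^sup>2 * (\<Sum>i<M. (z i)\<^sup>2)"
        unfolding unit[symmetric] by (simp add: power2_eq_square algebra_simps sum.distrib sum_distrib_left)
      ultimately show ?thesis by (simp add: algebra_simps)
    qed
    from quadratic_nonpos_imp_linear_zero[OF this] show ?thesis by simp
  qed
  define u where "u = (\<lambda>j. mix M P (mix M P ym) j - \<mu> * ym j)"
  have "(\<Sum>j<M. u j) = 0"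
    unfolding u_def using sum_mix[OF cols, of "mix M P ym"] sum_mix[OF cols, of ym] mean0
    by (simp add: sum_subtractf sum_distrib_left[symmetric])
  then have "(\<Sum>j<M. mix M P ym j * mix M P u j) = \<mu> * (\<Sum>j<M. ym j * u j)"
    by (rule first_order)
  moreover have "(\<Sum>j<M. mix M P (mix M P ym) j * u j) = (\<Sum>j<M. mix M P ym j * mix M P u j)"
    by (rule sum_mult_mix_symmetric[OF sym])
  moreover have "(u j)\<^sup>2 = mix M P (mix M P ym) j * u j - \<mu> * (ym j * u j)" for j
    unfolding u_def by (simp add: power2_eq_square algebra_simps)
  ultimately have "(\<Sum>j<M. (u j)\<^sup>2) = 0"
    by (simp add: sum_subtractf sum_distrib_left)
  then have "u i = 0" using i by (simp add: sum_nonneg_eq_0_iff)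
  then show ?thesis unfolding u_def by simp
qed

text \<open>If \<open>P\<^sup>2 y = s\<^sup>2 y\<close>, then either \<open>P y + s y\<close> is an eigenvector of \<open>P\<close> for \<open>s\<close>,
  or \<open>y\<close> is one for \<open>-s\<close>.\<close>
lemma mix_sq_eigenvalue_le:
  fixes y :: "nat \<Rightarrow> real"
  assumes cols: "\<And>j. j < M \<Longrightarrow> (\<Sum>i<M. P $$ (i, j)) = 1"
    and eigen_bound: "\<And>\<beta> w i0. i0 < M \<Longrightarrow> w i0 \<noteq> 0 \<Longrightarrow> (\<And>i. i < M \<Longrightarrow> mix M P w i = \<beta> * w i)
                \<Longrightarrow> (\<Sum>i<M. w i) = 0 \<Longrightarrow> \<bar>\<beta>\<bar> \<le> r"
    and mean0: "(\<Sum>i<M. y i) = 0" and i0: "i0 < M" "y i0 \<noteq> 0"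
    and eigen2: "\<And>i. i < M \<Longrightarrow> mix M P (mix M P y) i = s * s * y i" and s: "s \<ge> 0"
  shows "s \<le> r"
proof -
  define v where "v = (\<lambda>j. mix M P y j + s * y j)"
  have v_eigen: "mix M P v i = s * v i" if "i < M" for i
    using eigen2[OF that] unfolding v_def mix_add mix_mult by (simp add: algebra_simps)
  have v_mean0: "(\<Sum>i<M. v i) = 0"
    unfolding v_def using sum_mix[OF cols, of y] mean0 by (simp add: sum.distrib sum_distrib_left[symmetric])
  show ?thesis
  proof (cases "\<exists>i1<M. v i1 \<noteq> 0")
    case True
    then obtain i1 where "i1 < M" "v i1 \<noteq> 0" by blast
    from eigen_bound[OF this v_eigen v_mean0] s show ?thesis by simp
  next
    case False
    then have "mix M P y i = (- s) * y i" if "i < M" for i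
      using that unfolding v_def by (auto simp: algebra_simps)
    from eigen_bound[OF i0 this mean0] s show ?thesis by simp
  qed
qed

text \<open>The maximal ratio \<open>|P y|\<^sup>2 / |y|\<^sup>2\<close> over mean-zero \<open>y\<close> is attained, and its square root
  is the modulus of an eigenvalue of \<open>P\<close> with a mean-zero eigenvector.\<close>
lemma mix_sq_sum_contraction:
  fixes y :: "nat \<Rightarrow> real"
  assumes sym: "\<And>i j. i < M \<Longrightarrow> j < M \<Longrightarrow> P $$ (i, j) = P $$ (j, i)"
    and cols: "\<And>j. j < M \<Longrightarrow> (\<Sum>i<M. P $$ (i, j)) = 1"
    and eigen_bound: "\<And>\<beta> w i0. i0 < M \<Longrightarrow> w i0 \<noteq> 0 \<Longrightarrow> (\<And>i. i < M \<Longrightarrow> mix M P w i = \<beta> * w i)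
                \<Longrightarrow> (\<Sum>i<M. w i) = 0 \<Longrightarrow> \<bar>\<beta>\<bar> \<le> r"
    and y: "(\<Sum>j<M. y j) = 0"
  shows "(\<Sum>i<M. (mix M P y i)\<^sup>2) \<le> r\<^sup>2 * (\<Sum>i<M. (y i)\<^sup>2)"
proof (cases "\<exists>i0<M. y i0 \<noteq> 0")
  case False
  then have "mix M P y i = 0" for i by (simp add: mix_real)
  then show ?thesis by (simp add: sum_nonneg)
next
  case True
  then obtain i0 where i0: "i0 < M" "y i0 \<noteq> 0" by blast
  from mix_sq_sum_maximizer[OF y i0, of P]
  obtain ym :: "nat \<Rightarrow> real" where mean0: "(\<Sum>i<M. ym i) = 0" and unit: "(\<Sum>i<M. (ym i)\<^sup>2) = 1"
    and max: "\<And>z. (\<Sum>i<M. z i) = 0 \<Longrightarrow>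
      (\<Sum>i<M. (mix M P z i)\<^sup>2) \<le> (\<Sum>i<M. (mix M P ym i)\<^sup>2) * (\<Sum>i<M. (z i)\<^sup>2)"
    by blast
  define \<mu> where "\<mu> = (\<Sum>i<M. (mix M P ym i)\<^sup>2)"
  define s where "s = sqrt \<mu>"
  have s: "s \<ge> 0" "s * s = \<mu>" unfolding s_def \<mu>_def by (simp_all add: sum_nonneg)
  have "\<exists>i1<M. ym i1 \<noteq> 0"
  proof (rule ccontr)
    assume "\<not> (\<exists>i1<M. ym i1 \<noteq> 0)"
    then have "(\<Sum>i<M. (ym i)\<^sup>2) = 0" by simp
    with unit show False by simp
  qed
  then obtain i1 where i1: "i1 < M" "ym i1 \<noteq> 0" by blast
  have "s \<le> r"
  proof (rule mix_sq_eigenvalue_le[OF cols eigen_bound mean0 i1 _ s(1)])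
    show "mix M P (mix M P ym) i = s * s * ym i" if "i < M" for i
      unfolding s(2) by (rule mix_sq_sum_maximizer_eigen[OF sym cols mean0 unit max[folded \<mu>_def] \<mu>_def that])
  qed
  then have "\<mu> \<le> r\<^sup>2" using s power_mono[of s r 2] by (simp add: power2_eq_square)
  then have "\<mu> * (\<Sum>i<M. (y i)\<^sup>2) \<le> r\<^sup>2 * (\<Sum>i<M. (y i)\<^sup>2)"
    by (intro mult_right_mono) (simp_all add: sum_nonneg)
  then show ?thesis using max[OF y] unfolding \<mu>_def by simp
qed

section \<open>Spread around the mean\<close>

text \<open>\<open>sq_dev M v\<close> is \<open>M\<close> times the consensus distance: \<open>\<Gamma>\<^sub>t\<close>, \<open>\<Xi>\<^sub>t\<close> and \<open>\<Psi>\<^sub>t\<close> are the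
  expectations of \<open>sq_dev M\<close> of \<open>x\<^sub>t\<close>, \<open>w\<^sub>t\<close> and \<open>g\<^sub>t\<close>, divided by \<open>M\<close>.\<close>

definition avg :: "nat \<Rightarrow> (nat \<Rightarrow> 'a::real_vector) \<Rightarrow> 'a" where
  "avg M v = (1 / real M) *\<^sub>R (\<Sum>j<M. v j)"

definition sq_dev :: "nat \<Rightarrow> (nat \<Rightarrow> 'a::real_normed_vector) \<Rightarrow> real" where
  "sq_dev M v = (\<Sum>i<M. (norm (v i - avg M v))\<^sup>2)"

lemma sq_dev_nonneg: "sq_dev M v \<ge> 0"
  unfolding sq_dev_def by (simp add: sum_nonneg)

lemma avg_add: "avg M (\<lambda>i. u i + v i) = avg M u + avg M v"
  unfolding avg_def by (simp add: sum.distrib scaleR_add_right)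

lemma avg_scaleR: "avg M (\<lambda>i. c *\<^sub>R v i) = c *\<^sub>R avg M v"
  unfolding avg_def by (simp add: scaleR_sum_right[symmetric])

lemma power2_norm_add_le_young:
  fixes a b :: "'a::real_normed_vector"
  assumes c: "c > 0"
  shows "(norm (a + b))\<^sup>2 \<le> (1 + c) * (norm a)\<^sup>2 + (1 + 1 / c) * (norm b)\<^sup>2"
proof -
  have "0 \<le> (c * norm a - norm b)\<^sup>2 / c" using c by simp
  also have "\<dots> = c * (norm a)\<^sup>2 - 2 * norm a * norm b + (norm b)\<^sup>2 / c"
    using c by (simp add: power2_eq_square field_simps)
  finally have "2 * norm a * norm b \<le> c * (norm a)\<^sup>2 + (norm b)\<^sup>2 / c" by simp
  moreover have "(norm (a + b))\<^sup>2 \<le> (norm a + norm b)\<^sup>2"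
    by (rule power_mono[OF norm_triangle_ineq]) simp
  ultimately show ?thesis by (simp add: power2_eq_square algebra_simps)
qed

lemma power2_norm_add3_le:
  fixes a b d :: "'a::real_normed_vector"
  shows "(norm (a + b + d))\<^sup>2 \<le> 3 * ((norm a)\<^sup>2 + (norm b)\<^sup>2 + (norm d)\<^sup>2)"
proof -
  have "norm (a + b + d) \<le> norm a + norm b + norm d"
    by (metis add_mono norm_triangle_ineq order_trans order_refl)
  then have "(norm (a + b + d))\<^sup>2 \<le> (norm a + norm b + norm d)\<^sup>2"
    by (rule power_mono) simp
  moreover have "0 \<le> (norm a - norm b)\<^sup>2 + (norm b - norm d)\<^sup>2 + (norm a - norm d)\<^sup>2" by simp
  ultimately show ?thesis by (simp add: power2_eq_square algebra_simps)
qed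

lemma sq_dev_add_le:
  assumes "c > 0"
  shows "sq_dev M (\<lambda>i. u i + v i) \<le> (1 + c) * sq_dev M u + (1 + 1 / c) * sq_dev M v"
proof -
  have "sq_dev M (\<lambda>i. u i + v i) = (\<Sum>i<M. (norm ((u i - avg M u) + (v i - avg M v)))\<^sup>2)"
    unfolding sq_dev_def avg_add by (simp add: algebra_simps)
  also have "\<dots> \<le> (\<Sum>i<M. (1 + c) * (norm (u i - avg M u))\<^sup>2 + (1 + 1 / c) * (norm (v i - avg M v))\<^sup>2)"
    by (intro sum_mono power2_norm_add_le_young assms)
  also have "\<dots> = (1 + c) * sq_dev M u + (1 + 1 / c) * sq_dev M v"
    unfolding sq_dev_def by (simp add: sum.distrib sum_distrib_left)
  finally show ?thesis .
qed

lemma sq_dev_add3_le: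
  "sq_dev M (\<lambda>i. a i + b i + d i) \<le> 3 * (sq_dev M a + sq_dev M b + sq_dev M d)"
proof -
  have "sq_dev M (\<lambda>i. a i + b i + d i)
      = (\<Sum>i<M. (norm ((a i - avg M a) + (b i - avg M b) + (d i - avg M d)))\<^sup>2)"
    unfolding sq_dev_def avg_add by (simp add: algebra_simps)
  also have "\<dots> \<le> (\<Sum>i<M. 3 * ((norm (a i - avg M a))\<^sup>2 + (norm (b i - avg M b))\<^sup>2
      + (norm (d i - avg M d))\<^sup>2))"
    by (intro sum_mono power2_norm_add3_le)
  also have "\<dots> = 3 * (sq_dev M a + sq_dev M b + sq_dev M d)"
    unfolding sq_dev_def by (simp add: sum.distrib sum_distrib_left)
  finally show ?thesis .
qed

lemma sq_dev_scaleR: "sq_dev M (\<lambda>i. c *\<^sub>R v i) = c\<^sup>2 * sq_dev M v"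
  unfolding sq_dev_def avg_scaleR
  by (simp add: scaleR_diff_right[symmetric] power_mult_distrib sum_distrib_left)

lemma sq_dev_const: "sq_dev M (\<lambda>_. c) = 0"
  by (cases "M = 0") (simp_all add: sq_dev_def avg_def sum_constant_scaleR)

lemma sq_dev_le_sum_power2_norm:
  fixes v :: "nat \<Rightarrow> 'a::real_inner"
  shows "sq_dev M v \<le> (\<Sum>i<M. (norm (v i))\<^sup>2)"
proof -
  define m where "m = avg M v"
  have sum_v: "(\<Sum>i<M. v i) = real M *\<^sub>R m"
    unfolding m_def avg_def by (cases "M = 0") simp_all
  have "sq_dev M v = (\<Sum>i<M. (norm (v i))\<^sup>2 - 2 * inner (v i) m + (norm m)\<^sup>2)"
    unfolding sq_dev_def m_def[symmetric]
    by (rule sum.cong) (simp_all add: power2_norm_eq_inner inner_diff_left inner_diff_right inner_commute)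
  also have "\<dots> = (\<Sum>i<M. (norm (v i))\<^sup>2) - 2 * inner (\<Sum>i<M. v i) m + real M * (norm m)\<^sup>2"
    by (simp add: sum.distrib sum_subtractf inner_sum_left sum_distrib_left)
  also have "\<dots> = (\<Sum>i<M. (norm (v i))\<^sup>2) - real M * (norm m)\<^sup>2"
    unfolding sum_v by (simp add: power2_norm_eq_inner)
  finally show ?thesis by simp
qed

text \<open>A vector-valued mixing step acts coordinatewise, so the scalar contraction bound
  transfers to \<open>sq_dev\<close> by expanding norms in an orthonormal basis.\<close>
lemma sq_dev_mix_le:
  fixes v :: "nat \<Rightarrow> 'a::euclidean_space" and r :: real
  assumes rows: "\<And>i. i < M \<Longrightarrow> (\<Sum>j<M. P $$ (i, j)) = 1"
    and cols: "\<And>j. j < M \<Longrightarrow> (\<Sum>i<M. P $$ (i, j)) = 1"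
    and contraction: "\<And>y. (\<Sum>j<M. y j) = 0 \<Longrightarrow> (\<Sum>i<M. (mix M P y i)\<^sup>2) \<le> r\<^sup>2 * (\<Sum>i<M. (y i)\<^sup>2)"
  shows "sq_dev M (mix M P v) \<le> r\<^sup>2 * sq_dev M v"
proof (cases "M = 0")
  case True
  then show ?thesis by (simp add: sq_dev_def)
next
  case False
  define e where "e = (\<lambda>j. v j - avg M v)"
  have "(\<Sum>j<M. v j) = real M *\<^sub>R avg M v" unfolding avg_def using False by simp
  then have e_mean0: "(\<Sum>j<M. e j) = 0"
    unfolding e_def by (simp add: sum_subtractf sum_constant_scaleR)
  have avg_mix: "avg M (mix M P v) = avg M v"
    unfolding avg_def using sum_mix[OF cols, of v] by simp
  have mix_e: "mix M P v i - avg M v = mix M P e i" if "i < M" for i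
    unfolding e_def mix_def using rows[OF that]
    by (simp add: scaleR_diff_right sum_subtractf scaleR_sum_left[symmetric])
  define y where "y = (\<lambda>b j. inner (e j) b)"
  have y_mean0: "(\<Sum>j<M. y b j) = 0" for b
    unfolding y_def using e_mean0 by (simp add: inner_sum_left[symmetric])
  have coord: "inner (mix M P e i) b = mix M P (y b) i" for i b
    unfolding y_def mix_def by (simp add: inner_sum_left)
  have norm_basis: "(norm x)\<^sup>2 = (\<Sum>b\<in>Basis. (inner x b)\<^sup>2)" for x :: 'a
    unfolding power2_norm_eq_inner by (subst euclidean_inner) (simp add: power2_eq_square)
  have "sq_dev M (mix M P v) = (\<Sum>i<M. \<Sum>b\<in>Basis. (mix M P (y b) i)\<^sup>2)"
    unfolding sq_dev_def avg_mix by (simp add: mix_e norm_basis coord)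
  also have "\<dots> = (\<Sum>b\<in>Basis. \<Sum>i<M. (mix M P (y b) i)\<^sup>2)" by (rule sum.swap)
  also have "\<dots> \<le> (\<Sum>b\<in>Basis. r\<^sup>2 * (\<Sum>i<M. (y b i)\<^sup>2))"
    by (intro sum_mono contraction y_mean0)
  also have "\<dots> = r\<^sup>2 * (\<Sum>i<M. \<Sum>b\<in>Basis. (y b i)\<^sup>2)"
    by (simp add: sum_distrib_left[symmetric] sum.swap[of _ Basis])
  also have "\<dots> = r\<^sup>2 * sq_dev M v"
    unfolding sq_dev_def y_def e_def by (simp add: norm_basis)
  finally show ?thesis .
qed

lemma abs_le_abs_second_if_sorted:
  fixes lam :: "nat \<Rightarrow> real"
  assumes "\<And>k. 1 \<le> k \<Longrightarrow> k + 1 < M \<Longrightarrow> \<bar>lam (k + 1)\<bar> \<le> \<bar>lam k\<bar>"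
  shows "1 \<le> k \<Longrightarrow> k < M \<Longrightarrow> \<bar>lam k\<bar> \<le> \<bar>lam 1\<bar>"
proof (induction k rule: dec_induct)
  case (step k)
  then show ?case using assms[of k] by simp
qed simp

lemma sq_dev_mix_le_second_eigenvalue:
  fixes v :: "nat \<Rightarrow> 'a::euclidean_space" and lam :: "nat \<Rightarrow> real"
  assumes P_dim: "P \<in> carrier_mat M M"
    and P_sym: "transpose_mat P = P"
    and P_stoch: "\<And>i. i < M \<Longrightarrow> (\<Sum>j<M. P $$ (i, j)) = 1"
    and P_eigs: "char_poly P = (\<Prod>k<M. [:- lam k, 1:])"
    and lam_1: "lam 0 = 1"
    and lam_2: "\<bar>lam 1\<bar> < 1"
    and lam_sorted: "\<And>k. 1 \<le> k \<Longrightarrow> k + 1 < M \<Longrightarrow> \<bar>lam (k + 1)\<bar> \<le> \<bar>lam k\<bar>"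
  shows "sq_dev M (mix M P v) \<le> \<bar>lam 1\<bar>\<^sup>2 * sq_dev M v"
proof -
  have sym: "P $$ (i, j) = P $$ (j, i)" if "i < M" "j < M" for i j
    using P_dim that by (metis P_sym carrier_matD index_transpose_mat(1))
  have cols: "(\<Sum>i<M. P $$ (i, j)) = 1" if "j < M" for j
    using P_stoch[OF that] sym that by (metis (no_types, lifting) lessThan_iff sum.cong)
  have below_second: "\<bar>lam k\<bar> \<le> \<bar>lam 1\<bar>" if "1 \<le> k" "k < M" for k
    using abs_le_abs_second_if_sorted[where lam=lam and M=M, OF lam_sorted that] .
  have simple: "lam k \<noteq> 1" if "1 \<le> k" "k < M" for k
    using below_second[OF that] lam_2 by auto
  have eigen_bound: "\<bar>\<beta>\<bar> \<le> \<bar>lam 1\<bar>"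
    if i0: "i0 < M" "w i0 \<noteq> 0" and eigen: "\<And>i. i < M \<Longrightarrow> mix M P w i = \<beta> * w i"
      and mean0: "(\<Sum>i<M. w i) = 0" for \<beta> and w :: "nat \<Rightarrow> real" and i0
  proof -
    obtain k where k: "k < M" "\<beta> = lam k" using eigenvalue_mix_root[OF P_dim P_eigs i0 eigen] by blast
    show ?thesis
    proof (cases "k = 0")
      case True
      then have "\<And>i. i < M \<Longrightarrow> mix M P w i = w i" using eigen k lam_1 by simp
      from mean_zero_fixed_point_zero[OF P_dim P_eigs simple P_stoch this mean0 i0(1)] i0(2)
      show ?thesis by simp
    next
      case False
      then show ?thesis using below_second[of k] k by simp
    qed
  qed
  have contraction: "(\<Sum>i<M. (mix M P y i)\<^sup>2) \<le> \<bar>lam 1\<bar>\<^sup>2 * (\<Sum>i<M. (y i)\<^sup>2)"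
    if "(\<Sum>j<M. y j) = 0" for y
    by (rule mix_sq_sum_contraction[OF sym cols eigen_bound that])
  show ?thesis by (rule sq_dev_mix_le[OF P_stoch cols contraction])
qed

section \<open>One round of DAT-SGD\<close>

lemma sq_dev_add_le_rho:
  assumes "0 < \<rho>" "\<rho> \<le> 1"
  shows "sq_dev M (\<lambda>i. u i + v i) \<le> (1 + \<rho> / 2) * sq_dev M u + 3 / \<rho> * sq_dev M v"
proof -
  have "sq_dev M (\<lambda>i. u i + v i) \<le> (1 + \<rho> / 2) * sq_dev M u + (1 + 1 / (\<rho> / 2)) * sq_dev M v"
    by (rule sq_dev_add_le) (use assms in simp)
  also have "\<dots> \<le> (1 + \<rho> / 2) * sq_dev M u + 3 / \<rho> * sq_dev M v"
    using assms by (intro add_left_mono mult_right_mono sq_dev_nonneg) (simp add: field_simps)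
  finally show ?thesis .
qed

lemma sq_dev_mix_add_le:
  fixes u v :: "nat \<Rightarrow> 'a::real_normed_vector"
  assumes rho: "0 < \<rho>" "\<rho> \<le> 1"
    and gossip: "\<And>v :: nat \<Rightarrow> 'a. sq_dev M (mix M P v) \<le> (1 - \<rho>)\<^sup>2 * sq_dev M v"
  shows "sq_dev M (mix M P (\<lambda>i. u i + v i)) \<le> (1 - \<rho> / 2) * sq_dev M u + 3 / \<rho> * sq_dev M v"
proof -
  have shrink: "(1 - \<rho>)\<^sup>2 * (1 + \<rho> / 2) \<le> 1 - \<rho> / 2"
  proof -
    have "(1 - \<rho>)\<^sup>2 * (1 + \<rho> / 2) = 1 - \<rho> / 2 - \<rho> * (1 - \<rho>\<^sup>2 / 2)"
      by (simp add: power2_eq_square algebra_simps)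
    moreover have "\<rho>\<^sup>2 \<le> 1" using rho by (simp add: power_le_one)
    ultimately show ?thesis using rho by (simp add: mult_nonneg_nonneg)
  qed
  have "(1 - \<rho>)\<^sup>2 \<le> 1" using rho by (simp add: power_le_one)
  then have "(1 - \<rho>)\<^sup>2 * (3 / \<rho>) \<le> 1 * (3 / \<rho>)" by (rule mult_right_mono) (use rho in simp)
  then have keep: "(1 - \<rho>)\<^sup>2 * (3 / \<rho>) \<le> 3 / \<rho>" by simp
  have "sq_dev M (mix M P (\<lambda>i. u i + v i)) \<le> (1 - \<rho>)\<^sup>2 * sq_dev M (\<lambda>i. u i + v i)"
    by (rule gossip)
  also have "\<dots> \<le> (1 - \<rho>)\<^sup>2 * ((1 + \<rho> / 2) * sq_dev M u + 3 / \<rho> * sq_dev M v)"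
    by (intro mult_left_mono sq_dev_add_le_rho rho) simp
  also have "\<dots> \<le> (1 - \<rho> / 2) * sq_dev M u + 3 / \<rho> * sq_dev M v"
    using shrink keep
    by (simp only: distrib_left mult.assoc[symmetric]) (intro add_mono mult_right_mono sq_dev_nonneg)
  finally show ?thesis .
qed

lemma sq_dev_gradients_le:
  fixes x g :: "nat \<Rightarrow> 'a::real_inner" and gF :: "nat \<Rightarrow> 'a \<Rightarrow> 'a"
  assumes M: "M \<ge> 1"
    and smooth: "\<And>i x y. i < M \<Longrightarrow> norm (gF i x - gF i y) \<le> L * norm (x - y)"
    and heterogeneity: "\<And>x. (1 / real M) * sq_dev M (\<lambda>i. gF i x) \<le> \<zeta>\<^sup>2"
  shows "sq_dev M g \<le> 3 * (\<Sum>i<M. (norm (g i - gF i (x i)))\<^sup>2) + 3 * L\<^sup>2 * sq_dev M x + 3 * real M * \<zeta>\<^sup>2"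
proof -
  define xb where "xb = avg M x"
  have "sq_dev M (\<lambda>i. gF i (x i) - gF i xb) \<le> (\<Sum>i<M. (norm (gF i (x i) - gF i xb))\<^sup>2)"
    by (rule sq_dev_le_sum_power2_norm)
  also have "\<dots> \<le> (\<Sum>i<M. L\<^sup>2 * (norm (x i - xb))\<^sup>2)"
  proof (rule sum_mono)
    fix i assume "i \<in> {..<M}"
    then have "(norm (gF i (x i) - gF i xb))\<^sup>2 \<le> (L * norm (x i - xb))\<^sup>2"
      using smooth by (intro power_mono) auto
    then show "(norm (gF i (x i) - gF i xb))\<^sup>2 \<le> L\<^sup>2 * (norm (x i - xb))\<^sup>2"
      by (simp add: power_mult_distrib)
  qed
  also have "\<dots> = L\<^sup>2 * sq_dev M x" unfolding sq_dev_def xb_def by (simp add: sum_distrib_left)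
  finally have lipschitz_part: "sq_dev M (\<lambda>i. gF i (x i) - gF i xb) \<le> L\<^sup>2 * sq_dev M x" .
  have "sq_dev M (\<lambda>i. gF i xb) \<le> real M * \<zeta>\<^sup>2"
    using heterogeneity[of xb] M by (simp add: field_simps)
  moreover have "sq_dev M (\<lambda>i. g i - gF i (x i)) \<le> (\<Sum>i<M. (norm (g i - gF i (x i)))\<^sup>2)"
    by (rule sq_dev_le_sum_power2_norm)
  ultimately have parts: "sq_dev M (\<lambda>i. g i - gF i (x i)) + sq_dev M (\<lambda>i. gF i (x i) - gF i xb)
      + sq_dev M (\<lambda>i. gF i xb)
      \<le> (\<Sum>i<M. (norm (g i - gF i (x i)))\<^sup>2) + L\<^sup>2 * sq_dev M x + real M * \<zeta>\<^sup>2"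
    using lipschitz_part by linarith
  have split: "sq_dev M g \<le> 3 * (sq_dev M (\<lambda>i. g i - gF i (x i)) +
      sq_dev M (\<lambda>i. gF i (x i) - gF i xb) + sq_dev M (\<lambda>i. gF i xb))"
    using sq_dev_add3_le[of M "\<lambda>i. g i - gF i (x i)" "\<lambda>i. gF i (x i) - gF i xb" "\<lambda>i. gF i xb"]
    by simp
  show ?thesis
    using order_trans[OF split mult_left_mono[OF parts]] by (simp add: algebra_simps)
qed

lemma linear_weight_ratio:
  assumes "t \<ge> 1"
  shows "real t / (\<Sum>s=1..t. real s) = 2 / (real t + 1)"
proof -
  have sum: "(\<Sum>s=1..t. real s) = real t * (real t + 1) / 2"
    by (induction t) (auto simp: field_simps)
  have "real t / (real t * (real t + 1) / 2) = real t * 2 / (real t * (real t + 1))" by simp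
  also have "\<dots> = 2 / (real t + 1)" using assms by simp
  finally show ?thesis unfolding sum .
qed

lemma linear_weight_recursion_le:
  fixes \<rho> K m \<eta> :: real
  assumes rho: "0 < \<rho>" "\<rho> \<le> 1" and "0 \<le> K" "0 \<le> m" and t: "t \<ge> 1"
  shows "(1 - \<rho> / 2) * (m * (2560 * K / \<rho> ^ 4) * \<eta>\<^sup>2)
      + 3 / \<rho> * (2 / (real t + 1))\<^sup>2 * (2 * (m * (27 * K / \<rho>\<^sup>2) * \<eta>\<^sup>2 * (real t)\<^sup>2))
    \<le> m * (2560 * K / \<rho> ^ 4) * \<eta>\<^sup>2"
proof -
  define R where "R = m * K * \<eta>\<^sup>2 / \<rho> ^ 3"
  have "R \<ge> 0" unfolding R_def using assms by simp
  have "(2 / (real t + 1) * real t)\<^sup>2 \<le> 2\<^sup>2"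
    by (intro power_mono) (auto simp: field_simps)
  then have weight: "(2 / (real t + 1))\<^sup>2 * (real t)\<^sup>2 \<le> 4"
    unfolding power_mult_distrib by simp
  have "3 / \<rho> * (2 / (real t + 1))\<^sup>2 * (2 * (m * (27 * K / \<rho>\<^sup>2) * \<eta>\<^sup>2 * (real t)\<^sup>2))
      = (6 / \<rho> * m * (27 * K / \<rho>\<^sup>2) * \<eta>\<^sup>2) * ((2 / (real t + 1))\<^sup>2 * (real t)\<^sup>2)"
    by (simp add: algebra_simps)
  also have "\<dots> \<le> (6 / \<rho> * m * (27 * K / \<rho>\<^sup>2) * \<eta>\<^sup>2) * 4"
    using assms weight by (intro mult_left_mono) auto
  also have "\<dots> = 648 * R"
    unfolding R_def using rho by (simp add: field_simps power2_eq_square power3_eq_cube)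
  also have "\<dots> \<le> 1280 * R" using \<open>R \<ge> 0\<close> by simp
  also have "\<dots> = \<rho> / 2 * (m * (2560 * K / \<rho> ^ 4) * \<eta>\<^sup>2)"
    unfolding R_def using rho by (simp add: field_simps power3_eq_cube power4_eq_xxxx)
  finally have gain: "3 / \<rho> * (2 / (real t + 1))\<^sup>2 * (2 * (m * (27 * K / \<rho>\<^sup>2) * \<eta>\<^sup>2 * (real t)\<^sup>2))
      \<le> \<rho> / 2 * (m * (2560 * K / \<rho> ^ 4) * \<eta>\<^sup>2)" .
  have "Y \<le> \<rho> / 2 * X \<Longrightarrow> (1 - \<rho> / 2) * X + Y \<le> X" for X Y :: real
    by (simp add: algebra_simps)
  from this[OF gain] show ?thesis .
qed

lemma dat_step_eq:
  "dat_step M P gf \<eta> \<alpha> t zs wx =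
    (let wh = (\<lambda>i. fst wx i - (\<eta> * \<alpha> t) *\<^sub>R gf i (snd wx i) (zs i)); \<delta> = \<alpha> t / (\<Sum>s=1..t. \<alpha> s)
     in (mix M P wh, mix M P (\<lambda>i. (1 - \<delta>) *\<^sub>R snd wx i + \<delta> *\<^sub>R wh i)))"
  by (simp add: dat_step_def Let_def mix_def fun_eq_iff)

lemma dat_iter_cong:
  assumes "\<And>s j. 1 \<le> s \<Longrightarrow> s < t \<Longrightarrow> j < M \<Longrightarrow> z s j = z' s j"
  shows "dat_iter M P gf \<eta> \<alpha> w1 z t = dat_iter M P gf \<eta> \<alpha> w1 z' t"
  using assms
proof (induction t)
  case (Suc t)
  then show ?case
    by (cases "t = 0") (auto simp: dat_step_def Let_def intro!: sum.cong ext)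
qed simp

lemma dat_iter_measurable:
  fixes zf :: "nat \<Rightarrow> nat \<Rightarrow> 'n \<Rightarrow> 'z" and gf :: "nat \<Rightarrow> 'x::euclidean_space \<Rightarrow> 'z \<Rightarrow> 'x"
  assumes gf_meas: "\<And>i. i < M \<Longrightarrow> (\<lambda>(x, z). gf i x z) \<in> borel_measurable (borel \<Otimes>\<^sub>M D i)"
    and zf_meas: "\<And>s j. 1 \<le> s \<Longrightarrow> s < t \<Longrightarrow> j < M \<Longrightarrow> zf s j \<in> measurable N (D j)"
  shows "(\<lambda>\<omega>. fst (dat_iter M P gf \<eta> \<alpha> w1 (\<lambda>s j. zf s j \<omega>) t) i) \<in> borel_measurable N \<and>
         (\<lambda>\<omega>. snd (dat_iter M P gf \<eta> \<alpha> w1 (\<lambda>s j. zf s j \<omega>) t) i) \<in> borel_measurable N"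
  using zf_meas
proof (induction t arbitrary: i)
  case (Suc t)
  show ?case
  proof (cases "t = 0")
    case False
    define W where "W = (\<lambda>\<omega>. fst (dat_iter M P gf \<eta> \<alpha> w1 (\<lambda>s j. zf s j \<omega>) t))"
    define X where "X = (\<lambda>\<omega>. snd (dat_iter M P gf \<eta> \<alpha> w1 (\<lambda>s j. zf s j \<omega>) t))"
    have IH: "(\<lambda>\<omega>. W \<omega> j) \<in> borel_measurable N" "(\<lambda>\<omega>. X \<omega> j) \<in> borel_measurable N" for j
      using Suc.IH[of j] Suc.prems unfolding W_def X_def by auto
    have "(\<lambda>\<omega>. gf j (X \<omega> j) (zf t j \<omega>)) \<in> borel_measurable N" if "j < M" for j
      using measurable_comp[OF measurable_Pair[OF IH(2) Suc.prems] gf_meas] False that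
      by (simp add: comp_def)
    then have "(\<lambda>\<omega>. mix M P (\<lambda>j. W \<omega> j - c *\<^sub>R gf j (X \<omega> j) (zf t j \<omega>)) i) \<in> borel_measurable N"
      "(\<lambda>\<omega>. mix M P (\<lambda>j. (1 - d) *\<^sub>R X \<omega> j + d *\<^sub>R (W \<omega> j - c *\<^sub>R gf j (X \<omega> j) (zf t j \<omega>))) i)
         \<in> borel_measurable N" for c d
      unfolding mix_def using IH by (auto intro!: borel_measurable_sum borel_measurable_scaleR)
    then show ?thesis
      using False unfolding W_def X_def by (simp add: dat_step_eq Let_def)
  qed simp
qed simp

lemma dat_iter_past_measurable:
  fixes gf :: "nat \<Rightarrow> 'x::euclidean_space \<Rightarrow> 'z \<Rightarrow> 'x"
  assumes gf_meas: "\<And>i. i < M \<Longrightarrow> (\<lambda>(x, z). gf i x z) \<in> borel_measurable (borel \<Otimes>\<^sub>M D i)"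
  shows "(\<lambda>f. snd (dat_iter M P gf \<eta> \<alpha> w1 (\<lambda>s j. f (s, j)) t) i)
           \<in> borel_measurable (PiM ({1..<t} \<times> {..<M}) (\<lambda>(s, j). D j))"
proof -
  have "(\<lambda>f. f (s, j)) \<in> measurable (PiM ({1..<t} \<times> {..<M}) (\<lambda>(s, j). D j)) (D j)"
    if "1 \<le> s" "s < t" "j < M" for s j
    using measurable_component_singleton[of "(s, j)" "{1..<t} \<times> {..<M}" "\<lambda>(s, j). D j"] that by simp
  from dat_iter_measurable[where M=M and gf=gf and D=D and t=t and zf="\<lambda>s j f. f (s, j)"
      and N="PiM ({1..<t} \<times> {..<M}) (\<lambda>(s, j). D j)" and P=P and \<eta>=\<eta> and \<alpha>=\<alpha> and ?w1.0=w1
      and i=i, OF gf_meas this]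
  show ?thesis by (rule conjunct2)
qed

lemma borel_measurable_sq_dev:
  fixes V :: "'n \<Rightarrow> nat \<Rightarrow> 'a::euclidean_space"
  assumes "\<And>i. i < M \<Longrightarrow> (\<lambda>\<omega>. V \<omega> i) \<in> borel_measurable N"
  shows "(\<lambda>\<omega>. sq_dev M (V \<omega>)) \<in> borel_measurable N"
  unfolding sq_dev_def avg_def using assms
  by (auto intro!: borel_measurable_sum borel_measurable_power borel_measurable_norm
      borel_measurable_diff borel_measurable_scaleR)

section \<open>Expectations along a run\<close>

lemma (in prob_space) nn_integral_le_affine:
  assumes meas: "g1 \<in> borel_measurable M" "g2 \<in> borel_measurable M"
    and nonneg: "\<And>\<omega>. 0 \<le> g1 \<omega>" "\<And>\<omega>. 0 \<le> g2 \<omega>" "0 \<le> a" "0 \<le> b" "0 \<le> c" "0 \<le> B1" "0 \<le> B2"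
    and le: "\<And>\<omega>. f \<omega> \<le> a * g1 \<omega> + b * g2 \<omega> + c"
    and B1: "(\<integral>\<^sup>+ \<omega>. ennreal (g1 \<omega>) \<partial>M) \<le> ennreal B1"
    and B2: "(\<integral>\<^sup>+ \<omega>. ennreal (g2 \<omega>) \<partial>M) \<le> ennreal B2"
  shows "(\<integral>\<^sup>+ \<omega>. ennreal (f \<omega>) \<partial>M) \<le> ennreal (a * B1 + b * B2 + c)"
proof -
  have "(\<integral>\<^sup>+ \<omega>. ennreal (f \<omega>) \<partial>M)
      \<le> (\<integral>\<^sup>+ \<omega>. ennreal a * ennreal (g1 \<omega>) + ennreal b * ennreal (g2 \<omega>) + ennreal c \<partial>M)"
    using le nonneg
    by (intro nn_integral_mono)
       (simp add: ennreal_leI ennreal_plus[symmetric] ennreal_mult[symmetric] del: ennreal_plus)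
  also have "\<dots> = ennreal a * (\<integral>\<^sup>+ \<omega>. ennreal (g1 \<omega>) \<partial>M)
      + ennreal b * (\<integral>\<^sup>+ \<omega>. ennreal (g2 \<omega>) \<partial>M) + ennreal c"
    using meas by (simp add: nn_integral_add nn_integral_cmult emeasure_space_1)
  also have "\<dots> \<le> ennreal a * ennreal B1 + ennreal b * ennreal B2 + ennreal c"
    by (intro add_mono mult_left_mono B1 B2) auto
  also have "\<dots> = ennreal (a * B1 + b * B2 + c)"
    using nonneg by (simp add: ennreal_plus[symmetric] ennreal_mult[symmetric] del: ennreal_plus)
  finally show ?thesis .
qed

text \<open>Fubini on the joint law, which independence turns into a product measure.\<close>
lemma (in prob_space) nn_integral_indep_var_le:
  assumes indep: "indep_var N1 X1 N2 X2" and H: "H \<in> borel_measurable (N1 \<Otimes>\<^sub>M N2)"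
    and bound: "\<And>a. a \<in> space N1 \<Longrightarrow> (\<integral>\<^sup>+ \<omega>. H (a, X2 \<omega>) \<partial>M) \<le> c"
  shows "(\<integral>\<^sup>+ \<omega>. H (X1 \<omega>, X2 \<omega>) \<partial>M) \<le> c"
proof -
  have X1: "random_variable N1 X1" and X2: "random_variable N2 X2"
    and joint: "distr M N1 X1 \<Otimes>\<^sub>M distr M N2 X2 = distr M (N1 \<Otimes>\<^sub>M N2) (\<lambda>\<omega>. (X1 \<omega>, X2 \<omega>))"
    using indep unfolding indep_var_distribution_eq by auto
  interpret D1: prob_space "distr M N1 X1" by (rule prob_space_distr[OF X1])
  interpret D2: prob_space "distr M N2 X2" by (rule prob_space_distr[OF X2])
  have "(\<integral>\<^sup>+ \<omega>. H (X1 \<omega>, X2 \<omega>) \<partial>M) = (\<integral>\<^sup>+ p. H p \<partial>distr M (N1 \<Otimes>\<^sub>M N2) (\<lambda>\<omega>. (X1 \<omega>, X2 \<omega>)))"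
    using X1 X2 H by (simp add: nn_integral_distr)
  also have "\<dots> = (\<integral>\<^sup>+ a. \<integral>\<^sup>+ b. H (a, b) \<partial>distr M N2 X2 \<partial>distr M N1 X1)"
    unfolding joint[symmetric] by (rule D2.nn_integral_fst[symmetric]) (use H in simp)
  also have "\<dots> = (\<integral>\<^sup>+ a. \<integral>\<^sup>+ \<omega>. H (a, X2 \<omega>) \<partial>M \<partial>distr M N1 X1)"
    using X2 H by (intro nn_integral_cong nn_integral_distr) (simp_all add: measurable_Pair2)
  also have "\<dots> \<le> (\<integral>\<^sup>+ a. c \<partial>distr M N1 X1)"
    by (rule nn_integral_mono) (use bound in simp)
  also have "\<dots> = c" using D1.emeasure_space_1 by simp
  finally show ?thesis .
qed

text \<open>Along the sample path \<open>\<omega>\<close>, \<open>W t \<omega>\<close>, \<open>X t \<omega>\<close>, \<open>grad t \<omega>\<close> and \<open>half_step t \<omega>\<close> are the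
  families \<open>w\<^sub>t\<close>, \<open>x\<^sub>t\<close>, \<open>g\<^sub>t\<close> and \<open>w\<^sub>t\<^sub>+\<^sub>1\<^sub>/\<^sub>2\<close>.\<close>
locale dat_sgd =
  fixes M :: nat and P :: "real mat"
    and gf :: "nat \<Rightarrow> 'x::euclidean_space \<Rightarrow> 'z \<Rightarrow> 'x" and gF :: "nat \<Rightarrow> 'x \<Rightarrow> 'x"
    and D :: "nat \<Rightarrow> 'z measure" and S :: "'w measure" and Z :: "nat \<Rightarrow> nat \<Rightarrow> 'w \<Rightarrow> 'z"
    and L \<sigma> \<zeta> \<rho> \<eta> :: real and w1 :: 'x
  assumes M_pos: "M \<ge> 1"
    and gossip: "\<And>v :: nat \<Rightarrow> 'x. sq_dev M (mix M P v) \<le> (1 - \<rho>)\<^sup>2 * sq_dev M v"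
    and rho: "0 < \<rho>" "\<rho> \<le> 1"
    and D_prob: "\<And>i. i < M \<Longrightarrow> prob_space (D i)"
    and gf_meas: "\<And>i. i < M \<Longrightarrow> (\<lambda>(x, z). gf i x z) \<in> borel_measurable (borel \<Otimes>\<^sub>M D i)"
    and L_pos: "L > 0"
    and smooth: "\<And>i x y. i < M \<Longrightarrow> norm (gF i x - gF i y) \<le> L * norm (x - y)"
    and variance: "\<And>i x. i < M \<Longrightarrow>
        (\<integral>\<^sup>+ z. ennreal ((norm (gf i x z - gF i x))\<^sup>2) \<partial>D i) \<le> ennreal (\<sigma>\<^sup>2)"
    and heterogeneity: "\<And>x. (1 / real M) * sq_dev M (\<lambda>i. gF i x) \<le> \<zeta>\<^sup>2"
    and S_prob: "prob_space S"
    and Z_distr: "\<And>s i. s \<ge> 1 \<Longrightarrow> i < M \<Longrightarrow>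
        Z s i \<in> measurable S (D i) \<and> distr S (D i) (Z s i) = D i"
    and Z_indep: "prob_space.indep_vars S (\<lambda>(s, i). D i) (\<lambda>(s, i). Z s i) ({1..} \<times> {..<M})"
    and eta: "0 < \<eta>" "\<eta> \<le> \<rho>\<^sup>2 / (8 * sqrt 80 * L)"
begin

sublocale S: prob_space S by (rule S_prob)

definition iterate :: "nat \<Rightarrow> 'w \<Rightarrow> (nat \<Rightarrow> 'x) \<times> (nat \<Rightarrow> 'x)" where
  "iterate t \<omega> = dat_iter M P gf \<eta> (\<lambda>s. real s) w1 (\<lambda>s j. Z s j \<omega>) t"

abbreviation W :: "nat \<Rightarrow> 'w \<Rightarrow> nat \<Rightarrow> 'x" where
  "W t \<omega> \<equiv> fst (iterate t \<omega>)"

abbreviation X :: "nat \<Rightarrow> 'w \<Rightarrow> nat \<Rightarrow> 'x" where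
  "X t \<omega> \<equiv> snd (iterate t \<omega>)"

definition grad :: "nat \<Rightarrow> 'w \<Rightarrow> nat \<Rightarrow> 'x" where
  "grad t \<omega> = (\<lambda>i. gf i (X t \<omega> i) (Z t i \<omega>))"

definition half_step :: "nat \<Rightarrow> 'w \<Rightarrow> nat \<Rightarrow> 'x" where
  "half_step t \<omega> = (\<lambda>i. W t \<omega> i - (\<eta> * real t) *\<^sub>R grad t \<omega> i)"

lemma iterate_Suc:
  assumes "t \<ge> 1"
  shows "W (Suc t) \<omega> = mix M P (half_step t \<omega>)"
    and "X (Suc t) \<omega> = mix M P (\<lambda>i. (1 - 2 / (real t + 1)) *\<^sub>R X t \<omega> i
                                   + (2 / (real t + 1)) *\<^sub>R half_step t \<omega> i)"
  using assms linear_weight_ratio[OF assms]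
  by (simp_all add: iterate_def dat_step_eq Let_def half_step_def grad_def)

lemma Z_measurable: "1 \<le> s \<Longrightarrow> j < M \<Longrightarrow> Z s j \<in> measurable S (D j)"
  using Z_distr by blast

lemma iterate_measurable:
  "(\<lambda>\<omega>. W t \<omega> i) \<in> borel_measurable S" "(\<lambda>\<omega>. X t \<omega> i) \<in> borel_measurable S"
  using dat_iter_measurable[where N=S and zf=Z, OF gf_meas Z_measurable]
  unfolding iterate_def by blast+

lemma gF_measurable: "i < M \<Longrightarrow> gF i \<in> borel_measurable borel"
  by (intro borel_measurable_continuous_onI lipschitz_on_continuous_on[of L] lipschitz_onI)
     (use smooth L_pos in \<open>auto simp: dist_norm\<close>)

lemma grad_measurable: "t \<ge> 1 \<Longrightarrow> i < M \<Longrightarrow> (\<lambda>\<omega>. grad t \<omega> i) \<in> borel_measurable S"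
  using measurable_comp[OF measurable_Pair[OF iterate_measurable(2) Z_measurable] gf_meas]
  by (simp add: grad_def comp_def)

lemma sq_dev_measurable:
  assumes "t \<ge> 1"
  shows "(\<lambda>\<omega>. sq_dev M (W t \<omega>)) \<in> borel_measurable S"
    and "(\<lambda>\<omega>. sq_dev M (X t \<omega>)) \<in> borel_measurable S"
    and "(\<lambda>\<omega>. sq_dev M (grad t \<omega>)) \<in> borel_measurable S"
    and "(\<lambda>\<omega>. sq_dev M (half_step t \<omega>)) \<in> borel_measurable S"
  using assms iterate_measurable grad_measurable unfolding half_step_def
  by (auto intro!: borel_measurable_sq_dev borel_measurable_diff borel_measurable_scaleR)

lemma noise_sq_measurable:
  assumes i: "i < M"
  shows "(\<lambda>(x, z). ennreal ((norm (gf i x z - gF i x))\<^sup>2)) \<in> borel_measurable (borel \<Otimes>\<^sub>M D i)"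
proof -
  have "(\<lambda>p. gf i (fst p) (snd p) - gF i (fst p)) \<in> borel_measurable (borel \<Otimes>\<^sub>M D i)"
    using gf_meas[OF i] measurable_comp[OF measurable_fst gF_measurable[OF i]]
    by (intro borel_measurable_diff) (simp_all add: case_prod_beta' comp_def)
  then have "(\<lambda>p. norm (gf i (fst p) (snd p) - gF i (fst p))) \<in> borel_measurable (borel \<Otimes>\<^sub>M D i)"
    by (rule measurable_compose[OF _ borel_measurable_norm])
  then have "(\<lambda>p. (norm (gf i (fst p) (snd p) - gF i (fst p)))\<^sup>2) \<in> borel_measurable (borel \<Otimes>\<^sub>M D i)"
    by (rule borel_measurable_power)
  then show ?thesis unfolding case_prod_beta' by (rule measurable_compose[OF _ measurable_ennreal])
qed

text \<open>The iterate \<open>x\<^sub>t\<close> is a measurable function of the samples of the rounds before \<open>t\<close>,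
  which are independent of the sample \<open>z\<^sub>t\<close> drawn in round \<open>t\<close>.\<close>
lemma expected_noise_le:
  assumes t: "t \<ge> 1" and i: "i < M"
  shows "(\<integral>\<^sup>+ \<omega>. ennreal ((norm (grad t \<omega> i - gF i (X t \<omega> i)))\<^sup>2) \<partial>S) \<le> ennreal (\<sigma>\<^sup>2)"
proof -
  define N where "N = (\<lambda>(s::nat, j::nat). D j)"
  define A where "A = {1..<t} \<times> {..<M}"
  define past where "past = (\<lambda>\<omega>. restrict (\<lambda>k. (\<lambda>(s, j). Z s j) k \<omega>) A)"
  define now where "now = (\<lambda>\<omega>. restrict (\<lambda>k. (\<lambda>(s, j). Z s j) k \<omega>) {(t, i)})"
  define run where "run = (\<lambda>f. snd (dat_iter M P gf \<eta> (\<lambda>s. real s) w1 (\<lambda>s j. f (s, j)) t) i)"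
  define h where "h = (\<lambda>(x, z). ennreal ((norm (gf i x z - gF i x))\<^sup>2))"
  have indep: "S.indep_var (PiM A N) past (PiM {(t, i)} N) now"
    unfolding past_def now_def N_def
    by (rule S.indep_var_restrict[OF Z_indep]) (use t i in \<open>auto simp: A_def\<close>)
  have "run \<in> borel_measurable (PiM A N)"
    unfolding run_def A_def N_def by (rule dat_iter_past_measurable[OF gf_meas])
  moreover have now_t_i: "(\<lambda>f. f (t, i)) \<in> measurable (PiM {(t, i)} N) (D i)"
    using measurable_component_singleton[of "(t, i)" "{(t, i)}" N] by (simp add: N_def)
  moreover have h: "h \<in> borel_measurable (borel \<Otimes>\<^sub>M D i)"
    unfolding h_def by (rule noise_sq_measurable[OF i])
  ultimately have "(\<lambda>(a, b). h (run a, b (t, i))) \<in> borel_measurable (PiM A N \<Otimes>\<^sub>M PiM {(t, i)} N)"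
    by (simp add: case_prod_beta')
  moreover have "(\<integral>\<^sup>+ \<omega>. h (run a, now \<omega> (t, i)) \<partial>S) \<le> ennreal (\<sigma>\<^sup>2)" for a
  proof -
    have "(\<integral>\<^sup>+ \<omega>. h (run a, now \<omega> (t, i)) \<partial>S) = (\<integral>\<^sup>+ \<omega>. h (run a, Z t i \<omega>) \<partial>S)"
      by (simp add: now_def)
    also have "\<dots> = (\<integral>\<^sup>+ z. h (run a, z) \<partial>distr S (D i) (Z t i))"
      by (rule nn_integral_distr[symmetric]) (use Z_distr[OF t i] measurable_Pair2[OF h] in auto)
    also have "\<dots> = (\<integral>\<^sup>+ z. h (run a, z) \<partial>D i)" using Z_distr[OF t i] by simp
    also have "\<dots> \<le> ennreal (\<sigma>\<^sup>2)" using variance[OF i] by (simp add: h_def)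
    finally show ?thesis .
  qed
  ultimately have "(\<integral>\<^sup>+ \<omega>. (\<lambda>(a, b). h (run a, b (t, i))) (past \<omega>, now \<omega>) \<partial>S) \<le> ennreal (\<sigma>\<^sup>2)"
    by (intro S.nn_integral_indep_var_le[OF indep]) auto
  moreover have "run (past \<omega>) = X t \<omega> i" for \<omega>
    unfolding run_def past_def iterate_def
    by (intro arg_cong[where f="\<lambda>p. snd p i"] dat_iter_cong) (auto simp: A_def)
  ultimately show ?thesis by (simp add: h_def grad_def now_def)
qed

lemma expected_sq_dev_grad_le:
  assumes t: "t \<ge> 1" and "0 \<le> b"
    and X_bound: "(\<integral>\<^sup>+ \<omega>. ennreal (sq_dev M (X t \<omega>)) \<partial>S) \<le> ennreal b"
  shows "(\<integral>\<^sup>+ \<omega>. ennreal (sq_dev M (grad t \<omega>)) \<partial>S)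
           \<le> ennreal (3 * (real M * \<sigma>\<^sup>2) + 3 * L\<^sup>2 * b + 3 * real M * \<zeta>\<^sup>2)"
proof -
  define noise where "noise = (\<lambda>\<omega>. \<Sum>i<M. (norm (grad t \<omega> i - gF i (X t \<omega> i)))\<^sup>2)"
  have noise_i_meas: "(\<lambda>\<omega>. (norm (grad t \<omega> i - gF i (X t \<omega> i)))\<^sup>2) \<in> borel_measurable S"
    if "i < M" for i
  proof -
    have "(\<lambda>\<omega>. grad t \<omega> i - gF i (X t \<omega> i)) \<in> borel_measurable S"
      using grad_measurable[OF t that] measurable_comp[OF iterate_measurable(2) gF_measurable[OF that]]
      by (simp add: comp_def borel_measurable_diff)
    then have "(\<lambda>\<omega>. norm (grad t \<omega> i - gF i (X t \<omega> i))) \<in> borel_measurable S"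
      by (rule measurable_compose[OF _ borel_measurable_norm])
    then show ?thesis by (rule borel_measurable_power)
  qed
  then have noise_meas: "noise \<in> borel_measurable S"
    unfolding noise_def by (auto intro!: borel_measurable_sum)
  have "(\<integral>\<^sup>+ \<omega>. ennreal (noise \<omega>) \<partial>S)
      = (\<integral>\<^sup>+ \<omega>. (\<Sum>i<M. ennreal ((norm (grad t \<omega> i - gF i (X t \<omega> i)))\<^sup>2)) \<partial>S)"
    unfolding noise_def by (simp add: sum_ennreal)
  also have "\<dots> = (\<Sum>i<M. \<integral>\<^sup>+ \<omega>. ennreal ((norm (grad t \<omega> i - gF i (X t \<omega> i)))\<^sup>2) \<partial>S)"
    by (rule nn_integral_sum) (use noise_i_meas in auto)
  also have "\<dots> \<le> (\<Sum>i<M. ennreal (\<sigma>\<^sup>2))"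
    by (intro sum_mono expected_noise_le[OF t]) simp
  also have "\<dots> = ennreal (real M * \<sigma>\<^sup>2)" by (simp add: ennreal_of_nat_eq_real_of_nat ennreal_mult)
  finally have noise_bound: "(\<integral>\<^sup>+ \<omega>. ennreal (noise \<omega>) \<partial>S) \<le> ennreal (real M * \<sigma>\<^sup>2)" .
  have pointwise: "sq_dev M (grad t \<omega>) \<le> 3 * noise \<omega> + 3 * L\<^sup>2 * sq_dev M (X t \<omega>) + 3 * real M * \<zeta>\<^sup>2"
    for \<omega>
    unfolding noise_def by (rule sq_dev_gradients_le[OF M_pos smooth heterogeneity])
  have nonneg: "0 \<le> noise \<omega>" "0 \<le> real M * \<sigma>\<^sup>2" "0 \<le> (3::real)" "0 \<le> 3 * L\<^sup>2"
      "0 \<le> 3 * real M * \<zeta>\<^sup>2" for \<omega>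
    unfolding noise_def by (simp_all add: sum_nonneg)
  show ?thesis
    by (rule S.nn_integral_le_affine[OF noise_meas sq_dev_measurable(2)[OF t] nonneg(1) sq_dev_nonneg
          nonneg(3,4,5,2) \<open>0 \<le> b\<close> pointwise noise_bound X_bound])
qed

lemma expected_sq_dev_W_Suc_le:
  assumes t: "t \<ge> 1" and "0 \<le> a" "0 \<le> g"
    and W_bound: "(\<integral>\<^sup>+ \<omega>. ennreal (sq_dev M (W t \<omega>)) \<partial>S) \<le> ennreal a"
    and grad_bound: "(\<integral>\<^sup>+ \<omega>. ennreal (sq_dev M (grad t \<omega>)) \<partial>S) \<le> ennreal g"
  shows "(\<integral>\<^sup>+ \<omega>. ennreal (sq_dev M (W (Suc t) \<omega>)) \<partial>S)
           \<le> ennreal ((1 - \<rho> / 2) * a + 3 / \<rho> * (\<eta> * real t)\<^sup>2 * g)"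
    and "(\<integral>\<^sup>+ \<omega>. ennreal (sq_dev M (half_step t \<omega>)) \<partial>S)
           \<le> ennreal ((1 + \<rho> / 2) * a + 3 / \<rho> * (\<eta> * real t)\<^sup>2 * g)"
proof -
  have half_step_eq: "half_step t \<omega> = (\<lambda>i. W t \<omega> i + (- (\<eta> * real t)) *\<^sub>R grad t \<omega> i)" for \<omega>
    unfolding half_step_def by auto
  have coeffs: "0 \<le> 1 - \<rho> / 2" "0 \<le> 1 + \<rho> / 2" "0 \<le> 3 / \<rho> * (\<eta> * real t)\<^sup>2" "0 \<le> (0::real)"
    using rho by auto
  have "sq_dev M (W (Suc t) \<omega>)
      \<le> (1 - \<rho> / 2) * sq_dev M (W t \<omega>) + 3 / \<rho> * (\<eta> * real t)\<^sup>2 * sq_dev M (grad t \<omega>) + 0" for \<omega>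
  proof -
    have "sq_dev M (W (Suc t) \<omega>) \<le> (1 - \<rho> / 2) * sq_dev M (W t \<omega>)
        + 3 / \<rho> * sq_dev M (\<lambda>i. (- (\<eta> * real t)) *\<^sub>R grad t \<omega> i)"
      unfolding iterate_Suc(1)[OF t] half_step_eq by (rule sq_dev_mix_add_le[OF rho gossip])
    then show ?thesis by (simp only: sq_dev_scaleR power2_minus mult.assoc add_0_right)
  qed
  from S.nn_integral_le_affine[OF sq_dev_measurable(1,3)[OF t] sq_dev_nonneg sq_dev_nonneg
      coeffs(1,3,4) assms(2,3) this W_bound grad_bound]
  show "(\<integral>\<^sup>+ \<omega>. ennreal (sq_dev M (W (Suc t) \<omega>)) \<partial>S)
          \<le> ennreal ((1 - \<rho> / 2) * a + 3 / \<rho> * (\<eta> * real t)\<^sup>2 * g)"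
    by simp
  have "sq_dev M (half_step t \<omega>)
      \<le> (1 + \<rho> / 2) * sq_dev M (W t \<omega>) + 3 / \<rho> * (\<eta> * real t)\<^sup>2 * sq_dev M (grad t \<omega>) + 0" for \<omega>
  proof -
    have "sq_dev M (half_step t \<omega>) \<le> (1 + \<rho> / 2) * sq_dev M (W t \<omega>)
        + 3 / \<rho> * sq_dev M (\<lambda>i. (- (\<eta> * real t)) *\<^sub>R grad t \<omega> i)"
      unfolding half_step_eq by (rule sq_dev_add_le_rho[OF rho])
    then show ?thesis by (simp only: sq_dev_scaleR power2_minus mult.assoc add_0_right)
  qed
  from S.nn_integral_le_affine[OF sq_dev_measurable(1,3)[OF t] sq_dev_nonneg sq_dev_nonneg
      coeffs(2,3,4) assms(2,3) this W_bound grad_bound]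
  show "(\<integral>\<^sup>+ \<omega>. ennreal (sq_dev M (half_step t \<omega>)) \<partial>S)
          \<le> ennreal ((1 + \<rho> / 2) * a + 3 / \<rho> * (\<eta> * real t)\<^sup>2 * g)"
    by simp
qed

lemma expected_sq_dev_X_Suc_le:
  assumes t: "t \<ge> 1" and "0 \<le> b" "0 \<le> h"
    and X_bound: "(\<integral>\<^sup>+ \<omega>. ennreal (sq_dev M (X t \<omega>)) \<partial>S) \<le> ennreal b"
    and half_step_bound: "(\<integral>\<^sup>+ \<omega>. ennreal (sq_dev M (half_step t \<omega>)) \<partial>S) \<le> ennreal h"
  shows "(\<integral>\<^sup>+ \<omega>. ennreal (sq_dev M (X (Suc t) \<omega>)) \<partial>S)
           \<le> ennreal ((1 - \<rho> / 2) * b + 3 / \<rho> * (2 / (real t + 1))\<^sup>2 * h)"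
proof -
  define \<delta> where "\<delta> = 2 / (real t + 1)"
  have "0 \<le> \<delta>" "\<delta> \<le> 1" using t by (auto simp: \<delta>_def)
  then have shrink: "(1 - \<delta>)\<^sup>2 \<le> 1" by (simp add: power_le_one)
  have coeffs: "0 \<le> 1 - \<rho> / 2" "0 \<le> 3 / \<rho> * \<delta>\<^sup>2" "0 \<le> (0::real)"
    using rho by auto
  have "sq_dev M (X (Suc t) \<omega>)
      \<le> (1 - \<rho> / 2) * sq_dev M (X t \<omega>) + 3 / \<rho> * \<delta>\<^sup>2 * sq_dev M (half_step t \<omega>) + 0" for \<omega>
  proof -
    have "sq_dev M (X (Suc t) \<omega>) \<le> (1 - \<rho> / 2) * sq_dev M (\<lambda>i. (1 - \<delta>) *\<^sub>R X t \<omega> i)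
        + 3 / \<rho> * sq_dev M (\<lambda>i. \<delta> *\<^sub>R half_step t \<omega> i)"
      unfolding iterate_Suc(2)[OF t] \<delta>_def[symmetric] by (rule sq_dev_mix_add_le[OF rho gossip])
    also have "\<dots> = (1 - \<rho> / 2) * ((1 - \<delta>)\<^sup>2 * sq_dev M (X t \<omega>))
        + 3 / \<rho> * (\<delta>\<^sup>2 * sq_dev M (half_step t \<omega>))"
      by (simp only: sq_dev_scaleR)
    also have "\<dots> \<le> (1 - \<rho> / 2) * sq_dev M (X t \<omega>) + 3 / \<rho> * (\<delta>\<^sup>2 * sq_dev M (half_step t \<omega>))"
      using shrink coeffs by (intro add_right_mono mult_left_mono mult_left_le_one_le sq_dev_nonneg) auto
    finally show ?thesis by (simp add: mult.assoc)
  qed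
  from S.nn_integral_le_affine[OF sq_dev_measurable(2,4)[OF t] sq_dev_nonneg sq_dev_nonneg
      coeffs assms(2,3) this X_bound half_step_bound]
  show ?thesis by (simp add: \<delta>_def)
qed

lemma step_size_bound: "L\<^sup>2 * \<eta>\<^sup>2 \<le> \<rho> ^ 4 / 5120"
proof -
  have "\<eta> * L \<le> \<rho>\<^sup>2 / (8 * sqrt 80)" using eta L_pos by (simp add: field_simps)
  then have "(\<eta> * L)\<^sup>2 \<le> (\<rho>\<^sup>2 / (8 * sqrt 80))\<^sup>2"
    using eta L_pos by (intro power_mono) auto
  also have "\<dots> = \<rho> ^ 4 / 5120" by (simp add: power_divide power_mult_distrib)
  finally show ?thesis by (simp add: power_mult_distrib mult.commute)
qed

lemma expected_sq_dev_grad_le_tilde_sigma: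
  assumes t: "t \<ge> 1"
  defines "K \<equiv> 2 * \<sigma>\<^sup>2 + \<zeta>\<^sup>2"
  assumes X_bound: "(\<integral>\<^sup>+ \<omega>. ennreal (sq_dev M (X t \<omega>)) \<partial>S) \<le> ennreal (real M * (2560 * K / \<rho> ^ 4) * \<eta>\<^sup>2)"
  shows "(\<integral>\<^sup>+ \<omega>. ennreal (sq_dev M (grad t \<omega>)) \<partial>S) \<le> ennreal (9 / 2 * real M * K)"
proof -
  define B where "B = 2560 * K / \<rho> ^ 4"
  have K: "\<sigma>\<^sup>2 + \<zeta>\<^sup>2 \<le> K" unfolding K_def by simp
  have B: "0 \<le> B" unfolding B_def K_def using rho by simp
  have "3 * L\<^sup>2 * (real M * B * \<eta>\<^sup>2) = 3 * real M * B * (L\<^sup>2 * \<eta>\<^sup>2)" by (simp add: algebra_simps)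
  also have "\<dots> \<le> 3 * real M * B * (\<rho> ^ 4 / 5120)"
    using B by (intro mult_left_mono step_size_bound) auto
  also have "\<dots> = 3 * real M * (K / 2)" using rho by (simp add: B_def)
  finally have "3 * (real M * \<sigma>\<^sup>2) + 3 * L\<^sup>2 * (real M * B * \<eta>\<^sup>2) + 3 * real M * \<zeta>\<^sup>2
      \<le> 9 / 2 * real M * K"
    using mult_left_mono[OF K, of "3 * real M"] by (simp add: algebra_simps)
  moreover have "0 \<le> real M * B * \<eta>\<^sup>2" using B by simp
  ultimately show ?thesis
    using order_trans[OF expected_sq_dev_grad_le[OF t _ X_bound[folded B_def]] ennreal_leI] by blast
qed

text \<open>Joint induction: \<open>E \<Xi>\<^sub>t\<close> may grow like \<open>t\<^sup>2\<close>, which the weight \<open>\<delta>\<^sub>t = 2 / (t + 1)\<close> of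
  \<open>w\<^sub>t\<^sub>+\<^sub>1\<^sub>/\<^sub>2\<close> in \<open>x\<^sub>t\<^sub>+\<^sub>1\<close> exactly compensates.\<close>
lemma expected_sq_dev_le:
  assumes "t \<ge> 1"
  defines "K \<equiv> 2 * \<sigma>\<^sup>2 + \<zeta>\<^sup>2"
  shows "(\<integral>\<^sup>+ \<omega>. ennreal (sq_dev M (W t \<omega>)) \<partial>S) \<le> ennreal (real M * (27 * K / \<rho>\<^sup>2) * \<eta>\<^sup>2 * (real t)\<^sup>2)
       \<and> (\<integral>\<^sup>+ \<omega>. ennreal (sq_dev M (X t \<omega>)) \<partial>S) \<le> ennreal (real M * (2560 * K / \<rho> ^ 4) * \<eta>\<^sup>2)"
  using assms(1)
proof (induction t rule: dec_induct)
  case base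
  then show ?case by (simp add: iterate_def sq_dev_const)
next
  case (step t)
  define A where "A = 27 * K / \<rho>\<^sup>2"
  define Q where "Q = real M * A * \<eta>\<^sup>2 * (real t)\<^sup>2"
  have t: "t \<ge> 1" using step.hyps by simp
  have K: "0 \<le> K" unfolding K_def by simp
  have AQ: "0 \<le> A" "0 \<le> Q" "0 \<le> 9 / 2 * real M * K" unfolding A_def Q_def using K rho by auto
  have W: "(\<integral>\<^sup>+ \<omega>. ennreal (sq_dev M (W t \<omega>)) \<partial>S) \<le> ennreal Q"
    and X: "(\<integral>\<^sup>+ \<omega>. ennreal (sq_dev M (X t \<omega>)) \<partial>S) \<le> ennreal (real M * (2560 * K / \<rho> ^ 4) * \<eta>\<^sup>2)"
    using step.IH unfolding A_def Q_def by auto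
  have gain: "3 / \<rho> * (\<eta> * real t)\<^sup>2 * (9 / 2 * real M * K) = \<rho> / 2 * Q"
    using rho unfolding Q_def A_def by (simp add: field_simps power2_eq_square)
  note WS = expected_sq_dev_W_Suc_le[OF t AQ(2,3) W
      expected_sq_dev_grad_le_tilde_sigma[OF t X[unfolded K_def], folded K_def], unfolded gain]
  have "(1 - \<rho> / 2) * Q + \<rho> / 2 * Q = real M * A * \<eta>\<^sup>2 * (real t)\<^sup>2"
    unfolding Q_def by (simp add: algebra_simps)
  also have "\<dots> \<le> real M * A * \<eta>\<^sup>2 * (real (Suc t))\<^sup>2"
    using AQ by (intro mult_left_mono power_mono) auto
  finally have "(\<integral>\<^sup>+ \<omega>. ennreal (sq_dev M (W (Suc t) \<omega>)) \<partial>S)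
      \<le> ennreal (real M * A * \<eta>\<^sup>2 * (real (Suc t))\<^sup>2)"
    by (rule order_trans[OF WS(1) ennreal_leI])
  moreover have "(1 + \<rho> / 2) * Q + \<rho> / 2 * Q \<le> 2 * Q"
    using mult_left_mono[OF rho(2) AQ(2)] by (simp add: algebra_simps)
  then have H: "(\<integral>\<^sup>+ \<omega>. ennreal (sq_dev M (half_step t \<omega>)) \<partial>S) \<le> ennreal (2 * Q)"
    by (rule order_trans[OF WS(2) ennreal_leI])
  have "0 \<le> real M * (2560 * K / \<rho> ^ 4) * \<eta>\<^sup>2" "0 \<le> 2 * Q" using K AQ by simp_all
  from order_trans[OF expected_sq_dev_X_Suc_le[OF t this X H] ennreal_leI]
  have "(\<integral>\<^sup>+ \<omega>. ennreal (sq_dev M (X (Suc t) \<omega>)) \<partial>S) \<le> ennreal (real M * (2560 * K / \<rho> ^ 4) * \<eta>\<^sup>2)"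
    using linear_weight_recursion_le[OF rho K _ t, of "real M" \<eta>] unfolding Q_def A_def by simp
  ultimately show ?case unfolding A_def by simp
qed

lemma consensus_x_le:
  assumes "t \<ge> 1"
  shows "consensus_x S M P gf \<eta> (\<lambda>s. real s) w1 Z t \<le> ennreal (2560 * (2 * \<sigma>\<^sup>2 + \<zeta>\<^sup>2) * \<eta>\<^sup>2 / \<rho> ^ 4)"
proof -
  have "consensus_x S M P gf \<eta> (\<lambda>s. real s) w1 Z t
      = (\<integral>\<^sup>+ \<omega>. ennreal (1 / real M) * ennreal (sq_dev M (X t \<omega>)) \<partial>S)"
    unfolding consensus_x_def sq_dev_def avg_def iterate_def
    by (rule nn_integral_cong) (simp add: ennreal_mult[symmetric] sum_nonneg)
  also have "\<dots> = ennreal (1 / real M) * (\<integral>\<^sup>+ \<omega>. ennreal (sq_dev M (X t \<omega>)) \<partial>S)"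
    using sq_dev_measurable(2)[OF assms] by (simp add: nn_integral_cmult)
  also have "\<dots> \<le> ennreal (1 / real M) * ennreal (real M * (2560 * (2 * \<sigma>\<^sup>2 + \<zeta>\<^sup>2) / \<rho> ^ 4) * \<eta>\<^sup>2)"
    using expected_sq_dev_le[OF assms] by (intro mult_left_mono) auto
  also have "\<dots> = ennreal (2560 * (2 * \<sigma>\<^sup>2 + \<zeta>\<^sup>2) * \<eta>\<^sup>2 / \<rho> ^ 4)"
    using M_pos rho by (simp add: ennreal_mult[symmetric])
  finally show ?thesis .
qed

end

theorem mainTheorem7:
  fixes M :: nat and L sigma zeta eta rho :: real
    and D :: "nat \<Rightarrow> 'z measure"
    and fz :: "nat \<Rightarrow> 'x::euclidean_space \<Rightarrow> 'z \<Rightarrow> real"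
    and gf :: "nat \<Rightarrow> 'x \<Rightarrow> 'z \<Rightarrow> 'x"
    and F :: "nat \<Rightarrow> 'x \<Rightarrow> real"
    and gF :: "nat \<Rightarrow> 'x \<Rightarrow> 'x"
    and P :: "real mat" and lam :: "nat \<Rightarrow> real"
    and S :: "'w measure" and Z :: "nat \<Rightarrow> nat \<Rightarrow> 'w \<Rightarrow> 'z"
    and w1 :: 'x and t :: nat
  assumes M_pos: "M \<ge> 1"
    (* distributions and stochastic functions *)
    and D_prob: "\<And>i. i < M \<Longrightarrow> prob_space (D i)"
    and fz_deriv: "\<And>i x z. i < M \<Longrightarrow> z \<in> space (D i) \<Longrightarrow>
        ((\<lambda>y. fz i y z) has_derivative (\<lambda>h. gf i x z \<bullet> h)) (at x)"
    and gf_meas: "\<And>i. i < M \<Longrightarrow> (\<lambda>(x, z). gf i x z) \<in> borel_measurable (borel \<Otimes>\<^sub>M D i)"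
    and F_def: "\<And>i x. i < M \<Longrightarrow> integrable (D i) (fz i x) \<and> F i x = (\<integral>z. fz i x z \<partial>D i)"
    and F_deriv: "\<And>i x. i < M \<Longrightarrow> (F i has_derivative (\<lambda>h. gF i x \<bullet> h)) (at x)"
    and unbiased: "\<And>i x. i < M \<Longrightarrow> integrable (D i) (gf i x) \<and> (\<integral>z. gf i x z \<partial>D i) = gF i x"
    (* standing assumptions *)
    and L_pos: "L > 0"
    and smooth: "\<And>i x y. i < M \<Longrightarrow> norm (gF i x - gF i y) \<le> L * norm (x - y)"
    and variance: "\<And>i x. i < M \<Longrightarrow>
        (\<integral>\<^sup>+ z. ennreal ((norm (gf i x z - gF i x))\<^sup>2) \<partial>D i) \<le> ennreal (sigma\<^sup>2)"
    and heterogeneity: "\<And>x. (1 / real M) *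
        (\<Sum>i<M. (norm (gF i x - (1 / real M) *\<^sub>R (\<Sum>j<M. gF j x)))\<^sup>2) \<le> zeta\<^sup>2"
    (* gossip matrix *)
    and P_dim: "P \<in> carrier_mat M M"
    and P_entries: "\<And>i j. i < M \<Longrightarrow> j < M \<Longrightarrow> 0 \<le> P $$ (i, j) \<and> P $$ (i, j) \<le> 1"
    and P_sym: "transpose_mat P = P"
    and P_stoch: "\<And>i. i < M \<Longrightarrow> (\<Sum>j<M. P $$ (i, j)) = 1"
    and P_eigs: "char_poly P = (\<Prod>k<M. [:- lam k, 1:])"
    and lam_1: "lam 0 = 1"
    and lam_2: "\<bar>lam 1\<bar> < 1"
    and lam_sorted: "\<And>k. 1 \<le> k \<Longrightarrow> k + 1 < M \<Longrightarrow> \<bar>lam (k + 1)\<bar> \<le> \<bar>lam k\<bar>"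
    and rho_def: "rho = 1 - \<bar>lam 1\<bar>"
    (* randomness: z_t^i ~ D_i, all independent *)
    and S_prob: "prob_space S"
    and Z_distr: "\<And>s i. s \<ge> 1 \<Longrightarrow> i < M \<Longrightarrow>
        Z s i \<in> measurable S (D i) \<and> distr S (D i) (Z s i) = D i"
    and Z_indep: "prob_space.indep_vars S (\<lambda>(s, i). D i) (\<lambda>(s, i). Z s i) ({1..} \<times> {..<M})"
    (* step size *)
    and eta_pos: "0 < eta"
    and eta_le: "eta \<le> rho\<^sup>2 / (8 * sqrt 80 * L)"
    and t_ge: "t \<ge> 1"
  shows "consensus_x S M P gf eta (\<lambda>s. real s) w1 Z t
           \<le> ennreal (2560 * (2 * sigma\<^sup>2 + zeta\<^sup>2) * eta\<^sup>2 / rho ^ 4)"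
proof -
  \<comment> \<open>Unbiasedness, the objectives \<open>F\<close>, \<open>fz\<close> and the entry bounds of \<open>P\<close> are not needed.\<close>
  have rho: "0 < rho" "rho \<le> 1" using rho_def lam_2 by auto
  have gossip: "sq_dev M (mix M P v) \<le> (1 - rho)\<^sup>2 * sq_dev M v" for v :: "nat \<Rightarrow> 'x"
    using sq_dev_mix_le_second_eigenvalue[OF P_dim P_sym P_stoch P_eigs lam_1 lam_2 lam_sorted, of v]
    by (simp add: rho_def)
  have spread: "(1 / real M) * sq_dev M (\<lambda>i. gF i x) \<le> zeta\<^sup>2" for x
    using heterogeneity[of x] by (simp add: sq_dev_def avg_def)
  interpret dat_sgd M P gf gF D S Z L sigma zeta rho eta w1
    using M_pos gossip rho D_prob gf_meas L_pos smooth variance spread S_prob Z_distr Z_indep eta_pos eta_le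
    by (rule dat_sgd.intro)
  show ?thesis by (rule consensus_x_le[OF t_ge])
qed

end
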